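(* Let $T\ge 1$, $n\ge 2$, $d\ge1$, $\boldsymbol\mu\in\mathbb{R}^d$, $\boldsymbol\Sigma\in\mathbb{R}^{d\times d}$ positive definite, $\mathbf{z}^*\in\mathbb{R}^d$ and $\tau\in\{1,\dots,T\}$. Data consist of batches $D_1,\dots,D_T$ of $n$ points $\mathbf{X}_{t,k}\in\mathbb{R}^d$ each. Under $\mathbf{H_0}$ all $nT$ points are i.i.d. $\mathcal{N}(\boldsymbol\mu,\boldsymbol\Sigma)$; under $\mathbf{H_1^\tau}$ they are generated the same way and then the $J$-th point of $D_\tau$ is replaced by $\mathbf{z}^*$, with $J$ uniform on $\{1,\dots,n\}$ independent of the data. Let $\hat{\boldsymbol\mu}_t=\frac{1}{nt}\sum_{j=1}^t\sum_{k=1}^n\mathbf{X}_{j,k}$ for $t=1,\dots,T$. Then \[ \frac{p(\hat{\boldsymbol\mu}_1,\dots,\hat{\boldsymbol\mu}_T\mid\mathbf{H_1^\tau})}{p(\hat{\boldsymbol\mu}_1,\dots,\hat{\boldsymbol\mu}_T\mid\mathbf{H_0})}=\frac{p(\hat{\boldsymbol\mu}_\tau\mid\hat{\boldsymbol\mu}_{\tau-1},\mathbf{H_1^\tau})}{p(\hat{\boldsymbol\mu}_\tau\mid\hat{\boldsymbol\mu}_{\tau-1},\mathbf{H_0})}, \] where $p(\cdot\mid\mathbf{H})$ denotes joint density under hypothesis $\mathbf{H}$, $p(\hat{\boldsymbol\mu}_\tau\mid\hat{\boldsymbol\mu}_{\tau-1},\mathbf{H})$ the conditional density of $\hat{\boldsymbol\mu}_\tau$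 given $\hat{\boldsymbol\mu}_{\tau-1}$, and for $\tau=1$ the conditional density is understood as the marginal density of $\hat{\boldsymbol\mu}_1$. *)

theory Defs
  imports "HOL-Probability.Probability"
begin

definition pos_def_mat :: "real^'d^'d \<Rightarrow> bool" where
  "pos_def_mat S \<longleftrightarrow> transpose S = S \<and> (\<forall>x::real^'d. x \<noteq> 0 \<longrightarrow> 0 < x \<bullet> (S *v x))"

definition mvn_density :: "real^'d \<Rightarrow> real^'d^'d \<Rightarrow> real^'d \<Rightarrow> real" where
  "mvn_density mu S x =
     exp (- (1/2) * ((x - mu) \<bullet> (matrix_inv S *v (x - mu))))
     / sqrt ((2 * pi) ^ CARD('d) * det S)"

definition data_H0 :: "nat \<Rightarrow> nat \<Rightarrow> real^'d \<Rightarrow> real^'d^'d \<Rightarrow> (nat \<times> nat \<Rightarrow> real^'d) measure" where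
  "data_H0 n T mu S =
     PiM ({1..T} \<times> {1..n}) (\<lambda>_. density lborel (\<lambda>x. ennreal (mvn_density mu S x)))"

definition data_H1 :: "nat \<Rightarrow> nat \<Rightarrow> real^'d \<Rightarrow> real^'d^'d \<Rightarrow> real^'d \<Rightarrow> nat
                       \<Rightarrow> (nat \<times> nat \<Rightarrow> real^'d) measure" where
  "data_H1 n T mu S z tau =
     distr (data_H0 n T mu S \<Otimes>\<^sub>M uniform_measure (count_space UNIV) {1..n})
           (PiM ({1..T} \<times> {1..n}) (\<lambda>_. lborel))
           (\<lambda>(X, j). X((tau, j) := z))"

definition muhat :: "nat \<Rightarrow> (nat \<times> nat \<Rightarrow> real^'d) \<Rightarrow> nat \<Rightarrow> real^'d" where
  "muhat n X t = (1 / (real n * real t)) *\<^sub>R (\<Sum>j\<in>{1..t}. \<Sum>k\<in>{1..n}. X (j, k))"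

definition muhat_vec :: "nat \<Rightarrow> nat \<Rightarrow> (nat \<times> nat \<Rightarrow> real^'d) \<Rightarrow> (nat \<Rightarrow> real^'d)" where
  "muhat_vec n T X = restrict (muhat n X) {1..T}"

definition cond_density ::
  "'a measure \<Rightarrow> ('a \<Rightarrow> 'b::euclidean_space) \<Rightarrow> ('a \<Rightarrow> 'c::euclidean_space) \<Rightarrow> ('b \<Rightarrow> 'c \<Rightarrow> real) \<Rightarrow> bool"
where
  "cond_density M Y X q \<longleftrightarrow>
     (\<exists>g h. distributed M (lborel \<Otimes>\<^sub>M lborel) (\<lambda>\<omega>. (Y \<omega>, X \<omega>)) g
          \<and> distributed M lborel Y h
          \<and> (\<forall>a b. q a b = enn2real (g (a, b)) / enn2real (h a)))"

text \<open>Degenerate case (no conditioning variable): q a b is a version of the marginal density of X.\<close>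
definition marg_as_cond_density ::
  "'a measure \<Rightarrow> ('a \<Rightarrow> 'c::euclidean_space) \<Rightarrow> ('b \<Rightarrow> 'c \<Rightarrow> real) \<Rightarrow> bool"
where
  "marg_as_cond_density M X q \<longleftrightarrow>
     (\<exists>m. distributed M lborel X m \<and> (\<forall>a b. q a b = enn2real (m b)))"

end

theory Submission
  imports Defs
begin

(* Let S_t be the sum of the t-th batch. The running means mu_t = (S_1 + ... + S_t) / (n t) are a
   linear bijective image of the independent batch sums, so the path (mu_1, ..., mu_T) has density
   prod_t (n t)^d p_t (n t mu_t - n (t - 1) mu_(t-1)), where p_t is the density of S_t. Replacing
   one point of batch tau changes only p_tau; hence the law of the path under H1 has density
   rho (S_tau) with respect to its law under H0, and S_tau is a function of (mu_(tau-1), mu_tau).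
   A likelihood ratio that factors through a statistic is also the likelihood ratio of that
   statistic, so the joint densities of (mu_(tau-1), mu_tau) have the same ratio as the densities
   of the whole path. Finally mu_(tau-1) does not involve batch tau, so its density is the same
   under both hypotheses and cancels from the conditional densities. *)

section \<open>Positive definite matrices and the Gaussian density\<close>

lemma pos_def_mat_invertible:
  fixes S :: "real^'d^'d"
  assumes "pos_def_mat S"
  shows "invertible S"
proof -
  have "inj ((*v) S)"
  proof (rule linear_injective_0[THEN iffD2])
    show "linear ((*v) S)" by simp
    show "\<forall>x. S *v x = 0 \<longrightarrow> x = 0"
      using assms unfolding pos_def_mat_def by (metis inner_zero_right less_irrefl)
  qed
  then show ?thesis
    using invertible_left_inverse matrix_left_invertible_injective by blast
qed

lemma pos_def_mat_inverse_pos: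
  fixes S :: "real^'d^'d"
  assumes "pos_def_mat S" and "v \<noteq> 0"
  shows "0 < v \<bullet> (matrix_inv S *v v)"
proof -
  have "invertible S" by (rule pos_def_mat_invertible[OF assms(1)])
  then have "S ** matrix_inv S = mat 1"
    unfolding invertible_def matrix_inv_def by (metis (mono_tags, lifting) someI_ex)
  define w where "w = matrix_inv S *v v"
  have v: "v = S *v w"
    unfolding w_def using \<open>S ** matrix_inv S = mat 1\<close> by (simp add: matrix_vector_mul_assoc)
  then have "w \<noteq> 0" using assms(2) by auto
  then have "0 < w \<bullet> (S *v w)" using assms(1) unfolding pos_def_mat_def by auto
  then show ?thesis unfolding w_def[symmetric] v[symmetric] by (simp add: inner_commute)
qed

text \<open>The segment from the identity to \<open>S\<close> consists of positive definite, hence invertible,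
  matrices, so the determinant cannot change sign along it.\<close>
lemma pos_def_mat_det_pos:
  fixes S :: "real^'d^'d"
  assumes "pos_def_mat S"
  shows "0 < det S"
proof (rule ccontr)
  assume "\<not> 0 < det S"
  define f where "f = (\<lambda>t::real. det ((1 - t) *\<^sub>R mat 1 + t *\<^sub>R S))"
  have "continuous_on {0..1} f"
    unfolding f_def det_def by (intro continuous_intros)
  moreover have "f 0 = 1" "f 1 \<le> 0"
    unfolding f_def using \<open>\<not> 0 < det S\<close> by simp_all
  ultimately obtain t where t: "0 \<le> t" "t \<le> 1" "f t = 0"
    using IVT2'[of f 1 0 0] by auto
  define M where "M = (1 - t) *\<^sub>R mat 1 + t *\<^sub>R S"
  have "pos_def_mat M"
    unfolding pos_def_mat_def
  proof (intro conjI allI impI)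
    show "transpose M = M" using assms unfolding M_def pos_def_mat_def
      by (simp add: transpose_def vec_eq_iff mat_def)
    fix x :: "real^'d" assume "x \<noteq> 0"
    have "M *v x = (1 - t) *\<^sub>R x + t *\<^sub>R (S *v x)"
      unfolding M_def by (simp add: matrix_vector_mult_add_rdistrib scaleR_matrix_vector_assoc[symmetric])
    then have "x \<bullet> (M *v x) = (1 - t) * (x \<bullet> x) + t * (x \<bullet> (S *v x))"
      by (simp add: inner_add_right)
    moreover have "0 < x \<bullet> x" "0 < x \<bullet> (S *v x)"
      using assms \<open>x \<noteq> 0\<close> unfolding pos_def_mat_def by auto
    ultimately show "0 < x \<bullet> (M *v x)" using t
      by (cases "t = 0") (auto intro: add_pos_nonneg add_nonneg_pos)
  qed
  then show False
    using pos_def_mat_invertible invertible_det_nz t(3) unfolding f_def M_def by blast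
qed

lemma pos_def_mat_inverse_coercive:
  fixes S :: "real^'d^'d"
  assumes "pos_def_mat S"
  obtains l where "0 < l" "\<And>v. l * (norm v)\<^sup>2 \<le> v \<bullet> (matrix_inv S *v v)"
proof -
  let ?g = "\<lambda>v::real^'d. v \<bullet> (matrix_inv S *v v)"
  have "continuous_on (sphere 0 1) ?g"
    by (intro continuous_intros linear_continuous_on matrix_vector_mult_linear_continuous_on)
  moreover have "sphere (0::real^'d) 1 \<noteq> {}" by simp
  ultimately obtain u where u: "u \<in> sphere 0 1" "\<And>y. y \<in> sphere 0 1 \<Longrightarrow> ?g u \<le> ?g y"
    using continuous_attains_inf[OF compact_sphere] by blast
  have "?g u * (norm v)\<^sup>2 \<le> ?g v" for v
  proof (cases "v = 0")
    case False
    define w where "w = (1 / norm v) *\<^sub>R v"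
    have "w \<in> sphere 0 1" and v: "v = norm v *\<^sub>R w" using False unfolding w_def by simp_all
    have "?g v = (norm v)\<^sup>2 * ?g w"
      by (subst (1 2) v) (simp add: matrix_vector_mult_scaleR power2_eq_square)
    then show ?thesis using u(2)[OF \<open>w \<in> sphere 0 1\<close>] by (simp add: mult_right_mono mult.commute)
  qed simp
  moreover have "u \<noteq> 0" using u(1) by auto
  then have "0 < ?g u" by (rule pos_def_mat_inverse_pos[OF assms])
  ultimately show ?thesis using that by blast
qed

lemma nn_integral_exp_neg_square_finite:
  fixes a :: real
  assumes "0 < a"
  shows "(\<integral>\<^sup>+y. ennreal (exp (- a * y\<^sup>2)) \<partial>lborel) < \<infinity>"
proof -
  define s where "s = sqrt (1 / (2 * a))"
  have s: "0 < s" "2 * s\<^sup>2 = 1 / a" unfolding s_def using assms by simp_all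
  define C where "C = sqrt (2 * pi * s\<^sup>2)"
  have "0 < C" unfolding C_def using s by simp
  have "exp (- a * y\<^sup>2) = C * normal_density 0 s y" for y
  proof -
    have "(y - 0)\<^sup>2 / (2 * s\<^sup>2) = a * y\<^sup>2" by (simp add: s(2) mult.commute)
    then show ?thesis unfolding normal_density_def C_def[symmetric] using \<open>0 < C\<close> by simp
  qed
  then have "(\<integral>\<^sup>+y. ennreal (exp (- a * y\<^sup>2)) \<partial>lborel)
      = (\<integral>\<^sup>+y. ennreal C * ennreal (normal_density 0 s y) \<partial>lborel)"
    using \<open>0 < C\<close> by (intro nn_integral_cong) (simp add: ennreal_mult)
  also have "\<dots> = ennreal C * (\<integral>\<^sup>+y. ennreal (normal_density 0 s y) \<partial>lborel)"
    by (rule nn_integral_cmult) simp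
  also have "(\<integral>\<^sup>+y. ennreal (normal_density 0 s y) \<partial>lborel) = 1"
  proof -
    interpret prob_space "density lborel (normal_density 0 s)"
      using prob_space_normal_density s by auto
    show ?thesis using emeasure_space_1 by (simp add: emeasure_density)
  qed
  finally show ?thesis by simp
qed

text \<open>In coordinates with respect to \<^term>\<open>Basis\<close>, the Gaussian factorises into a product of
  one-dimensional ones.\<close>
lemma nn_integral_exp_neg_norm_square_finite:
  fixes a :: real
  assumes "0 < a"
  shows "(\<integral>\<^sup>+x. ennreal (exp (- a * (norm (x::'v::euclidean_space))\<^sup>2)) \<partial>lborel) < \<infinity>"
proof -
  interpret P: product_sigma_finite "\<lambda>_::'v. lborel :: real measure" by standard
  have "(norm (\<Sum>b\<in>Basis. g b *\<^sub>R b :: 'v))\<^sup>2 = (\<Sum>b\<in>Basis. (g b)\<^sup>2)" for g :: "'v \<Rightarrow> real"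
    by (simp only: power2_norm_eq_inner)
       (simp add: inner_sum_left inner_sum_right inner_Basis if_distrib power2_eq_square cong: if_cong)
  then have factor: "ennreal (exp (- a * (norm (\<Sum>b\<in>Basis. g b *\<^sub>R b :: 'v))\<^sup>2))
      = (\<Prod>b\<in>(Basis::'v set). ennreal (exp (- a * (g b)\<^sup>2)))" for g
    by (simp add: sum_distrib_left exp_sum[symmetric] prod_ennreal)
  have "(\<integral>\<^sup>+x. ennreal (exp (- a * (norm (x::'v))\<^sup>2)) \<partial>lborel)
      = (\<integral>\<^sup>+g. ennreal (exp (- a * (norm (\<Sum>b\<in>Basis. g b *\<^sub>R b :: 'v))\<^sup>2)) \<partial>(\<Pi>\<^sub>M b\<in>Basis. lborel))"
    by (subst lborel_eq) (simp add: nn_integral_distr)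
  also have "\<dots> = (\<Prod>b\<in>(Basis::'v set). (\<integral>\<^sup>+y. ennreal (exp (- a * y\<^sup>2)) \<partial>lborel))"
    unfolding factor by (rule P.product_nn_integral_prod) auto
  also have "\<dots> < \<infinity>"
    using nn_integral_exp_neg_square_finite[OF assms] by (simp add: power_less_top_ennreal)
  finally show ?thesis .
qed

lemma nn_integral_lborel_affine:
  fixes t :: "'a::euclidean_space"
  assumes [measurable]: "f \<in> borel_measurable borel" and "c \<noteq> 0"
  shows "(\<integral>\<^sup>+x. f x \<partial>lborel) = ennreal (\<bar>c\<bar> ^ DIM('a)) * (\<integral>\<^sup>+x. f (t + c *\<^sub>R x) \<partial>lborel)"
  by (subst lborel_affine[OF \<open>c \<noteq> 0\<close>, of t])
     (simp add: nn_integral_density nn_integral_distr nn_integral_cmult)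

lemma nn_integral_lborel_translate:
  fixes t :: "'a::euclidean_space"
  assumes "f \<in> borel_measurable borel"
  shows "(\<integral>\<^sup>+x. f x \<partial>lborel) = (\<integral>\<^sup>+x. f (t + x) \<partial>lborel)"
  using nn_integral_lborel_affine[OF assms, of 1 t] by simp

lemma borel_measurable_mvn_density[measurable]: "mvn_density mu S \<in> borel_measurable borel"
proof -
  have "continuous_on UNIV (mvn_density mu S)"
    unfolding mvn_density_def divide_inverse
    by (intro continuous_intros bounded_linear.continuous_on[OF matrix_vector_mul_bounded_linear])
  then show ?thesis using borel_measurable_continuous_onI by blast
qed

lemma mvn_density_pos:
  fixes S :: "real^'d^'d"
  assumes "pos_def_mat S"
  shows "0 < mvn_density mu S x"
  unfolding mvn_density_def using pos_def_mat_det_pos[OF assms] by (intro divide_pos_pos) auto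

lemma nn_integral_mvn_density_finite:
  fixes S :: "real^'d^'d"
  assumes "pos_def_mat S"
  shows "(\<integral>\<^sup>+x. ennreal (mvn_density mu S x) \<partial>lborel) < \<infinity>"
proof -
  obtain l where l: "0 < l" "\<And>v. l * (norm v)\<^sup>2 \<le> v \<bullet> (matrix_inv S *v v)"
    using pos_def_mat_inverse_coercive[OF assms] by blast
  define K where "K = sqrt ((2 * pi) ^ CARD('d) * det S)"
  have "0 < K" unfolding K_def using pos_def_mat_det_pos[OF assms] by simp
  have "mvn_density mu S x \<le> (1 / K) * exp (- (l / 2) * (norm (x - mu))\<^sup>2)" for x
  proof -
    have "exp (- (1/2) * ((x - mu) \<bullet> (matrix_inv S *v (x - mu)))) \<le> exp (- (l / 2) * (norm (x - mu))\<^sup>2)"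
      using l(2)[of "x - mu"] by simp
    then show ?thesis
      unfolding mvn_density_def K_def[symmetric] using \<open>0 < K\<close> by (simp add: divide_right_mono)
  qed
  then have "(\<integral>\<^sup>+x. ennreal (mvn_density mu S x) \<partial>lborel)
      \<le> (\<integral>\<^sup>+x. ennreal (1 / K) * ennreal (exp (- (l / 2) * (norm (x - mu))\<^sup>2)) \<partial>lborel)"
    using \<open>0 < K\<close> by (intro nn_integral_mono) (simp add: ennreal_mult[symmetric] ennreal_leI)
  also have "\<dots> = ennreal (1 / K) * (\<integral>\<^sup>+x. ennreal (exp (- (l / 2) * (norm (x - mu))\<^sup>2)) \<partial>lborel)"
    by (rule nn_integral_cmult) simp
  also have "(\<integral>\<^sup>+x. ennreal (exp (- (l / 2) * (norm (x - mu))\<^sup>2)) \<partial>lborel)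
      = (\<integral>\<^sup>+x. ennreal (exp (- (l / 2) * (norm (x::real^'d))\<^sup>2)) \<partial>lborel)"
    by (subst nn_integral_lborel_translate[where t=mu]) auto
  also have "ennreal (1 / K) * \<dots> < \<infinity>"
    using nn_integral_exp_neg_norm_square_finite[of "l / 2", where 'v="real^'d"] l(1)
    by (simp add: ennreal_mult_less_top)
  finally show ?thesis .
qed

section \<open>Convolution powers and sums of independent vectors\<close>

text \<open>\<open>conv_pow \<phi> k\<close> is the \<open>(k + 1)\<close>-fold convolution power of \<open>\<phi>\<close>, i.e. the density of a
  sum of \<open>k + 1\<close> independent vectors with density \<open>\<phi>\<close>.\<close>
primrec conv_pow :: "('v::euclidean_space \<Rightarrow> ennreal) \<Rightarrow> nat \<Rightarrow> 'v \<Rightarrow> ennreal" where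
  "conv_pow \<phi> 0 = \<phi>"
| "conv_pow \<phi> (Suc k) = (\<lambda>b. \<integral>\<^sup>+x. \<phi> x * conv_pow \<phi> k (b - x) \<partial>lborel)"

lemma borel_measurable_conv_pow[measurable]:
  assumes [measurable]: "\<phi> \<in> borel_measurable borel"
  shows "conv_pow \<phi> k \<in> borel_measurable borel"
proof (induction k)
  case (Suc k)
  note Suc[measurable]
  show ?case by simp
qed simp

lemma conv_pow_pos:
  assumes [measurable]: "\<phi> \<in> borel_measurable borel" and pos: "\<And>x. 0 < \<phi> x"
  shows "0 < conv_pow \<phi> k b"
proof (induction k arbitrary: b)
  case 0
  then show ?case using pos by simp
next
  case (Suc k)
  have "\<not> (AE x in lborel. \<phi> x * conv_pow \<phi> k (b - x) = 0)"
  proof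
    assume "AE x in lborel. \<phi> x * conv_pow \<phi> k (b - x) = 0"
    moreover have "\<phi> x * conv_pow \<phi> k (b - x) \<noteq> 0" for x
      using pos[of x] Suc[of "b - x"] by auto
    ultimately have "AE x in (lborel::'a measure). False" by simp
    then have "emeasure (lborel::'a measure) (space lborel) = 0"
      using ae_filter_eq_bot_iff trivial_limit_def by metis
    then show False by simp
  qed
  then have "(\<integral>\<^sup>+x. \<phi> x * conv_pow \<phi> k (b - x) \<partial>lborel) \<noteq> 0"
    by (subst nn_integral_0_iff_AE) auto
  then show ?case by (simp add: zero_less_iff_neq_zero)
qed

lemma sum_insert_fun_upd:
  assumes "finite K" "i \<notin> K"
  shows "(\<Sum>j\<in>insert i K. (X(i := y)) j) = y + (\<Sum>j\<in>K. X j)"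
proof -
  have "(\<Sum>j\<in>K. (X(i := y)) j) = (\<Sum>j\<in>K. X j)" using assms(2) by (intro sum.cong) auto
  then show ?thesis using assms by (simp add: sum.insert fun_upd_same del: fun_upd_apply)
qed

context
  fixes \<phi> :: "'v::euclidean_space \<Rightarrow> ennreal"
  assumes \<phi>_meas[measurable]: "\<phi> \<in> borel_measurable borel"
    and \<phi>_fin: "(\<integral>\<^sup>+x. \<phi> x \<partial>lborel) < \<infinity>"
begin

lemma product_sigma_finite_density_lborel: "product_sigma_finite (\<lambda>_::'i. density lborel \<phi>)"
proof -
  have "finite_measure (density lborel \<phi>)"
    by (rule finite_measureI) (use \<phi>_fin in \<open>simp add: emeasure_density\<close>)
  then show ?thesis
    unfolding product_sigma_finite_def using finite_measure.sigma_finite_measure by blast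
qed

lemma nn_integral_PiM_sum:
  fixes K :: "'i set"
  assumes "finite K" "K \<noteq> {}" and "G \<in> borel_measurable borel"
  shows "(\<integral>\<^sup>+X. G (\<Sum>i\<in>K. X i) \<partial>PiM K (\<lambda>_. density lborel \<phi>))
       = (\<integral>\<^sup>+b. G b * conv_pow \<phi> (card K - 1) b \<partial>lborel)"
  using assms
proof (induction K arbitrary: G rule: finite_ne_induct)
  case (singleton i)
  note singleton[measurable]
  interpret product_sigma_finite "\<lambda>_::'i. density lborel \<phi>"
    by (rule product_sigma_finite_density_lborel)
  show ?case
    by (simp add: product_nn_integral_singleton nn_integral_density mult.commute)
next
  case (insert i K)
  note insert.prems[measurable]
  interpret product_sigma_finite "\<lambda>_::'i. density lborel \<phi>"
    by (rule product_sigma_finite_density_lborel)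
  define k where "k = card K - 1"
  have card: "card (insert i K) - 1 = Suc k"
    using insert by (simp add: k_def card_gt_0_iff Suc_diff_1)
  have "(\<integral>\<^sup>+X. G (\<Sum>j\<in>insert i K. X j) \<partial>PiM (insert i K) (\<lambda>_. density lborel \<phi>))
      = (\<integral>\<^sup>+X. (\<lambda>s. \<integral>\<^sup>+y. \<phi> y * G (y + s) \<partial>lborel) (\<Sum>j\<in>K. X j) \<partial>PiM K (\<lambda>_. density lborel \<phi>))"
    using insert
    by (subst product_nn_integral_insert)
       (simp_all add: sum_insert_fun_upd nn_integral_density del: fun_upd_apply sum.insert)
  also have "\<dots> = (\<integral>\<^sup>+s. (\<integral>\<^sup>+y. \<phi> y * G (y + s) \<partial>lborel) * conv_pow \<phi> k s \<partial>lborel)"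
    unfolding k_def by (rule insert.IH) simp
  also have "\<dots> = (\<integral>\<^sup>+y. (\<integral>\<^sup>+s. \<phi> y * G (y + s) * conv_pow \<phi> k s \<partial>lborel) \<partial>lborel)"
    by (subst lborel_pair.Fubini') (simp_all add: split_beta' nn_integral_multc)
  also have "\<dots> = (\<integral>\<^sup>+y. (\<integral>\<^sup>+b. \<phi> y * G b * conv_pow \<phi> k (b - y) \<partial>lborel) \<partial>lborel)"
  proof (rule nn_integral_cong)
    fix y :: 'v
    show "(\<integral>\<^sup>+s. \<phi> y * G (y + s) * conv_pow \<phi> k s \<partial>lborel)
        = (\<integral>\<^sup>+b. \<phi> y * G b * conv_pow \<phi> k (b - y) \<partial>lborel)"
      by (subst nn_integral_lborel_translate[where t="-y"]) (simp_all add: algebra_simps)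
  qed
  also have "\<dots> = (\<integral>\<^sup>+b. G b * conv_pow \<phi> (Suc k) b \<partial>lborel)"
    by (subst lborel_pair.Fubini')
       (simp_all add: split_beta' ac_simps nn_integral_cmult[symmetric])
  finally show ?case unfolding card .
qed

lemma nn_integral_PiM_sum_fun_upd:
  fixes K :: "'i set"
  assumes "finite K" "i0 \<in> K" "K - {i0} \<noteq> {}" and [measurable]: "G \<in> borel_measurable borel"
  shows "(\<integral>\<^sup>+X. G (\<Sum>i\<in>K. (X(i0 := z)) i) \<partial>PiM K (\<lambda>_. density lborel \<phi>))
       = (\<integral>\<^sup>+b. G b * ((\<integral>\<^sup>+x. \<phi> x \<partial>lborel) * conv_pow \<phi> (card K - 2) (b - z)) \<partial>lborel)"
proof -
  interpret product_sigma_finite "\<lambda>_::'i. density lborel \<phi>"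
    by (rule product_sigma_finite_density_lborel)
  define K' where "K' = K - {i0}"
  have K: "K = insert i0 K'" "i0 \<notin> K'" "finite K'" "K' \<noteq> {}"
    using assms unfolding K'_def by auto
  have card: "card K' - 1 = card K - 2"
    using K by (simp add: card_insert_if)
  define c where "c = (\<integral>\<^sup>+x. \<phi> x \<partial>lborel)"
  have "(\<integral>\<^sup>+X. G (\<Sum>i\<in>K. (X(i0 := z)) i) \<partial>PiM K (\<lambda>_. density lborel \<phi>))
      = (\<integral>\<^sup>+X. c * G (z + (\<Sum>i\<in>K'. X i)) \<partial>PiM K' (\<lambda>_. density lborel \<phi>))"
    unfolding K(1) using K
    by (subst product_nn_integral_insert)
       (simp_all add: sum_insert_fun_upd emeasure_density c_def mult.commute
         del: fun_upd_apply sum.insert)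
  also have "\<dots> = c * (\<integral>\<^sup>+s. G (z + s) * conv_pow \<phi> (card K' - 1) s \<partial>lborel)"
    using nn_integral_PiM_sum[OF K(3,4), of "\<lambda>s. G (z + s)"] by (subst nn_integral_cmult) simp_all
  also have "\<dots> = c * (\<integral>\<^sup>+b. G b * conv_pow \<phi> (card K' - 1) (b - z) \<partial>lborel)"
    by (subst nn_integral_lborel_translate[where t="-z"]) (simp_all add: algebra_simps)
  finally show ?thesis
    unfolding card c_def by (simp add: nn_integral_cmult[symmetric] ac_simps)
qed

end

section \<open>Running means of independent batch statistics\<close>

definition running_means :: "nat \<Rightarrow> (nat \<Rightarrow> 'a \<Rightarrow> 'v::real_vector) \<Rightarrow> nat \<Rightarrow> 'a \<Rightarrow> nat \<Rightarrow> 'v" where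
  "running_means n \<beta> t X = restrict (\<lambda>s. (1 / (real n * real s)) *\<^sub>R (\<Sum>r\<in>{1..s}. \<beta> r X)) {1..t}"

text \<open>Recovers the \<open>s\<close>-th batch statistic from the running means, i.e. inverts
  \<^const>\<open>running_means\<close>; for \<open>s = 1\<close> the second term vanishes.\<close>
definition batch_total :: "nat \<Rightarrow> nat \<Rightarrow> (nat \<Rightarrow> 'v) \<Rightarrow> 'v::real_vector" where
  "batch_total n s m = (real n * real s) *\<^sub>R m s - (real n * real (s - 1)) *\<^sub>R m (s - 1)"

text \<open>The factor \<open>(n s)\<^bsup>DIM('v)\<^esup>\<close> is the Jacobian of \<open>m\<^sub>s \<mapsto> batch_total n s m\<close>.\<close>
definition running_means_density ::
  "nat \<Rightarrow> (nat \<Rightarrow> 'v::euclidean_space \<Rightarrow> ennreal) \<Rightarrow> nat \<Rightarrow> (nat \<Rightarrow> 'v) \<Rightarrow> ennreal"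
where
  "running_means_density n p t m =
     (\<Prod>s\<in>{1..t}. ennreal ((real n * real s) ^ DIM('v)) * p s (batch_total n s m))"

lemma borel_measurable_batch_total[measurable]:
  assumes "s \<in> {1..t}"
  shows "batch_total n s \<in> borel_measurable (PiM {1..t} (\<lambda>_. (lborel :: 'v::euclidean_space measure)))"
proof (cases "s = 1")
  case True
  then show ?thesis unfolding batch_total_def using assms by simp
next
  case False
  then have "s - 1 \<in> {1..t}" using assms by auto
  then show ?thesis unfolding batch_total_def using assms by simp
qed

lemma borel_measurable_running_means_density[measurable]:
  assumes [measurable]: "\<And>s. p s \<in> borel_measurable borel"
  shows "running_means_density n p t \<in> borel_measurable (PiM {1..t} (\<lambda>_. lborel))"
  unfolding running_means_density_def
  by (intro borel_measurable_prod_ennreal borel_measurable_times_ennreal measurable_const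
       measurable_compose[OF borel_measurable_batch_total assms]) auto

lemma running_means_density_fun_upd:
  "running_means_density n p (Suc t) (m(Suc t := u))
     = running_means_density n p t m * (ennreal ((real n * real (Suc t)) ^ DIM('v))
         * p (Suc t) (batch_total n (Suc t) (m(Suc t := u))))"
  for m :: "nat \<Rightarrow> 'v::euclidean_space"
proof -
  have "running_means_density n p t (m(Suc t := u)) = running_means_density n p t m"
    unfolding running_means_density_def batch_total_def by (intro prod.cong) auto
  moreover have "running_means_density n p (Suc t) (m(Suc t := u))
      = running_means_density n p t (m(Suc t := u)) * (ennreal ((real n * real (Suc t)) ^ DIM('v))
         * p (Suc t) (batch_total n (Suc t) (m(Suc t := u))))"
    unfolding running_means_density_def by (simp add: prod.cl_ivl_Suc)
  ultimately show ?thesis by simp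
qed

lemma measurable_fun_upd_Suc:
  "(\<lambda>x. (fst x)(Suc t := snd x)) \<in> measurable (PiM {1..t} (\<lambda>_. M) \<Otimes>\<^sub>M M) (PiM {1..Suc t} (\<lambda>_. M))"
proof -
  have "insert (Suc t) {1..t} = {1..Suc t}" by auto
  then show ?thesis
    using measurable_add_dim[of "Suc t" "{1..t}" "\<lambda>_. M"] by (simp add: split_beta')
qed

lemma measurable_fun_upd_Suc_space:
  assumes "m \<in> space (PiM {1..t} (\<lambda>_. M))"
  shows "(\<lambda>u. m(Suc t := u)) \<in> measurable M (PiM {1..Suc t} (\<lambda>_. M))"
proof -
  have "insert (Suc t) {1..t} = {1..Suc t}" by auto
  then show ?thesis using measurable_component_update[OF assms, of "Suc t"] by simp
qed

definition next_mean_integral ::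
  "nat \<Rightarrow> (nat \<Rightarrow> 'v::euclidean_space \<Rightarrow> ennreal) \<Rightarrow> ((nat \<Rightarrow> 'v) \<Rightarrow> ennreal) \<Rightarrow> nat \<Rightarrow> (nat \<Rightarrow> 'v) \<Rightarrow> ennreal"
where
  "next_mean_integral n p G t m =
     (\<integral>\<^sup>+u. G (m(Suc t := u)) * (ennreal ((real n * real (Suc t)) ^ DIM('v))
        * p (Suc t) (batch_total n (Suc t) (m(Suc t := u)))) \<partial>lborel)"

context
  fixes p :: "nat \<Rightarrow> 'v::euclidean_space \<Rightarrow> ennreal" and G :: "(nat \<Rightarrow> 'v) \<Rightarrow> ennreal" and t :: nat
  assumes p_meas[measurable]: "\<And>s. p s \<in> borel_measurable borel"
    and G_meas[measurable]: "G \<in> borel_measurable (PiM {1..Suc t} (\<lambda>_. lborel))"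
begin

lemma borel_measurable_next_mean_integrand:
  "(\<lambda>m. G m * (ennreal ((real n * real (Suc t)) ^ DIM('v)) * p (Suc t) (batch_total n (Suc t) m)))
     \<in> borel_measurable (PiM {1..Suc t} (\<lambda>_. lborel))"
  by measurable

lemma borel_measurable_next_mean_integral:
  "next_mean_integral n p G t \<in> borel_measurable (PiM {1..t} (\<lambda>_. lborel))"
  using measurable_compose[OF measurable_fun_upd_Suc borel_measurable_next_mean_integrand]
  unfolding next_mean_integral_def[abs_def]
  by (intro lborel.borel_measurable_nn_integral) (simp add: split_beta')

lemma nn_integral_next_mean_integral:
  "(\<integral>\<^sup>+m. next_mean_integral n p G t m * running_means_density n p t m \<partial>PiM {1..t} (\<lambda>_. lborel))
     = (\<integral>\<^sup>+m. G m * running_means_density n p (Suc t) m \<partial>PiM {1..Suc t} (\<lambda>_. lborel))"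
proof -
  interpret L: product_sigma_finite "\<lambda>_::nat. (lborel :: 'v measure)" by standard
  have "(\<integral>\<^sup>+m. next_mean_integral n p G t m * running_means_density n p t m \<partial>PiM {1..t} (\<lambda>_. lborel))
      = (\<integral>\<^sup>+m. (\<integral>\<^sup>+u. G (m(Suc t := u)) * running_means_density n p (Suc t) (m(Suc t := u))
          \<partial>lborel) \<partial>PiM {1..t} (\<lambda>_. lborel))"
  proof (rule nn_integral_cong)
    fix m assume "m \<in> space (PiM {1..t} (\<lambda>_. (lborel :: 'v measure)))"
    from measurable_compose[OF measurable_fun_upd_Suc_space[OF this] borel_measurable_next_mean_integrand]
    have "next_mean_integral n p G t m * running_means_density n p t m
        = (\<integral>\<^sup>+u. G (m(Suc t := u)) * (ennreal ((real n * real (Suc t)) ^ DIM('v))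
            * p (Suc t) (batch_total n (Suc t) (m(Suc t := u)))) * running_means_density n p t m \<partial>lborel)"
      unfolding next_mean_integral_def by (rule nn_integral_multc[symmetric])
    then show "next_mean_integral n p G t m * running_means_density n p t m
        = (\<integral>\<^sup>+u. G (m(Suc t := u)) * running_means_density n p (Suc t) (m(Suc t := u)) \<partial>lborel)"
      by (simp add: running_means_density_fun_upd ac_simps)
  qed
  also have "\<dots> = (\<integral>\<^sup>+m. G m * running_means_density n p (Suc t) m \<partial>PiM {1..Suc t} (\<lambda>_. lborel))"
  proof -
    have ins: "insert (Suc t) {1..t} = {1..Suc t}" by auto
    have "(\<lambda>m. G m * running_means_density n p (Suc t) m)
        \<in> borel_measurable (PiM (insert (Suc t) {1..t}) (\<lambda>_. lborel))"
      unfolding ins by measurable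
    from L.product_nn_integral_insert[OF _ _ this] show ?thesis
      unfolding ins by simp
  qed
  finally show ?thesis .
qed

end

context
  fixes \<nu> :: "'v::euclidean_space measure" and n :: nat
    and \<beta> :: "nat \<Rightarrow> (nat \<times> nat \<Rightarrow> 'v) \<Rightarrow> 'v" and p :: "nat \<Rightarrow> 'v \<Rightarrow> ennreal"
  assumes product_\<nu>: "product_sigma_finite (\<lambda>_::nat \<times> nat. \<nu>)"
    and sets_\<nu>[measurable_cong]: "sets \<nu> = sets borel"
    and n_pos: "0 < n"
    and \<beta>_local: "\<And>r X Y. (\<And>k. k \<in> {1..n} \<Longrightarrow> X (r, k) = Y (r, k)) \<Longrightarrow> \<beta> r X = \<beta> r Y"
    and \<beta>_meas: "\<And>r. \<beta> r \<in> borel_measurable (PiM ({r} \<times> {1..n}) (\<lambda>_. \<nu>))"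
    and \<beta>_law: "\<And>r G. G \<in> borel_measurable borel \<Longrightarrow>
        (\<integral>\<^sup>+X. G (\<beta> r X) \<partial>PiM ({r} \<times> {1..n}) (\<lambda>_. \<nu>)) = (\<integral>\<^sup>+b. G b * p r b \<partial>lborel)"
    and p_meas[measurable]: "\<And>r. p r \<in> borel_measurable borel"
begin

lemma borel_measurable_batch_statistic[measurable]:
  assumes "r \<in> {1..t}"
  shows "\<beta> r \<in> borel_measurable (PiM ({1..t} \<times> {1..n}) (\<lambda>_. \<nu>))"
proof -
  have "{r} \<times> {1..n} \<subseteq> {1..t} \<times> {1..n}" using assms by auto
  then have "(\<lambda>X. \<beta> r (restrict X ({r} \<times> {1..n}))) \<in> borel_measurable (PiM ({1..t} \<times> {1..n}) (\<lambda>_. \<nu>))"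
    by (rule measurable_compose[OF measurable_restrict_subset \<beta>_meas])
  moreover have "\<beta> r (restrict X ({r} \<times> {1..n})) = \<beta> r X" for X
    by (rule \<beta>_local) simp
  ultimately show ?thesis by simp
qed

lemma measurable_running_means[measurable]:
  "running_means n \<beta> t \<in> measurable (PiM ({1..t} \<times> {1..n}) (\<lambda>_. \<nu>)) (PiM {1..t} (\<lambda>_. lborel))"
  unfolding running_means_def
proof (rule measurable_restrict)
  fix s assume "s \<in> {1..t}"
  then have "\<And>r. r \<in> {1..s} \<Longrightarrow> \<beta> r \<in> borel_measurable (PiM ({1..t} \<times> {1..n}) (\<lambda>_. \<nu>))"
    by (intro borel_measurable_batch_statistic) auto
  then show "(\<lambda>X. (1 / (real n * real s)) *\<^sub>R (\<Sum>r\<in>{1..s}. \<beta> r X))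
      \<in> measurable (PiM ({1..t} \<times> {1..n}) (\<lambda>_. \<nu>)) lborel"
    by (simp add: borel_measurable_sum)
qed

lemma running_means_merge:
  "running_means n \<beta> (Suc t) (merge ({1..t} \<times> {1..n}) ({Suc t} \<times> {1..n}) (x, y)) =
   (running_means n \<beta> t x)(Suc t := (1 / (real n * real (Suc t))) *\<^sub>R
        ((real n * real t) *\<^sub>R running_means n \<beta> t x t + \<beta> (Suc t) y))"
proof -
  let ?z = "merge ({1..t} \<times> {1..n}) ({Suc t} \<times> {1..n}) (x, y)"
  have old: "\<beta> r ?z = \<beta> r x" if "r \<in> {1..t}" for r
    using that by (intro \<beta>_local) (simp add: merge_def)
  have new: "\<beta> (Suc t) ?z = \<beta> (Suc t) y"
    by (intro \<beta>_local) (simp add: merge_def)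
  have "(real n * real t) *\<^sub>R running_means n \<beta> t x t = (\<Sum>r\<in>{1..t}. \<beta> r x)"
    using n_pos by (cases "t = 0") (simp_all add: running_means_def)
  then show ?thesis
    using old new n_pos
    by (auto simp: running_means_def sum.cl_ivl_Suc fun_eq_iff intro!: sum.cong)
qed

lemma nn_integral_next_batch:
  fixes t :: nat
  defines "c \<equiv> real n * real (Suc t)"
  assumes [measurable]: "G \<in> borel_measurable (PiM {1..Suc t} (\<lambda>_. lborel))"
    and m: "m \<in> space (PiM {1..t} (\<lambda>_. (lborel :: 'v measure)))"
  shows "(\<integral>\<^sup>+y. G (m(Suc t := (1 / c) *\<^sub>R ((real n * real t) *\<^sub>R m t + \<beta> (Suc t) y)))
            \<partial>PiM ({Suc t} \<times> {1..n}) (\<lambda>_. \<nu>))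
       = next_mean_integral n p G t m"
proof -
  have "c \<noteq> 0" "0 < c" unfolding c_def using n_pos by auto
  define a where "a = (real n * real t) *\<^sub>R m t"
  note measurable_fun_upd_Suc_space[OF m, measurable]
  have "(\<integral>\<^sup>+y. G (m(Suc t := (1 / c) *\<^sub>R (a + \<beta> (Suc t) y))) \<partial>PiM ({Suc t} \<times> {1..n}) (\<lambda>_. \<nu>))
      = (\<integral>\<^sup>+b. G (m(Suc t := (1 / c) *\<^sub>R (a + b))) * p (Suc t) b \<partial>lborel)"
    by (rule \<beta>_law) simp
  also have "\<dots> = ennreal (c ^ DIM('v)) * (\<integral>\<^sup>+u. G (m(Suc t := u)) * p (Suc t) (c *\<^sub>R u - a) \<partial>lborel)"
    using \<open>c \<noteq> 0\<close> \<open>0 < c\<close>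
    by (subst nn_integral_lborel_affine[where t="- a" and c=c]) (simp_all add: algebra_simps)
  also have "\<dots> = (\<integral>\<^sup>+u. G (m(Suc t := u)) * (ennreal (c ^ DIM('v)) * p (Suc t) (c *\<^sub>R u - a)) \<partial>lborel)"
    by (subst nn_integral_cmult[symmetric]) (simp_all add: ac_simps)
  finally show ?thesis
    unfolding a_def next_mean_integral_def batch_total_def c_def by simp
qed

lemma nn_integral_running_means_Suc:
  assumes [measurable]: "G \<in> borel_measurable (PiM {1..Suc t} (\<lambda>_. lborel))"
  shows "(\<integral>\<^sup>+X. G (running_means n \<beta> (Suc t) X) \<partial>PiM ({1..Suc t} \<times> {1..n}) (\<lambda>_. \<nu>))
       = (\<integral>\<^sup>+x. next_mean_integral n p G t (running_means n \<beta> t x) \<partial>PiM ({1..t} \<times> {1..n}) (\<lambda>_. \<nu>))"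
proof -
  interpret P: product_sigma_finite "\<lambda>_::nat \<times> nat. \<nu>" by (rule product_\<nu>)
  have split: "{1..Suc t} \<times> {1..n} = {1..t} \<times> {1..n} \<union> {Suc t} \<times> {1..n}" by auto
  have "(\<lambda>X. G (running_means n \<beta> (Suc t) X))
      \<in> borel_measurable (PiM ({1..t} \<times> {1..n} \<union> {Suc t} \<times> {1..n}) (\<lambda>_. \<nu>))"
    unfolding split[symmetric] by measurable
  then have "(\<integral>\<^sup>+X. G (running_means n \<beta> (Suc t) X) \<partial>PiM ({1..Suc t} \<times> {1..n}) (\<lambda>_. \<nu>))
      = (\<integral>\<^sup>+x. (\<integral>\<^sup>+y. G (running_means n \<beta> (Suc t) (merge ({1..t} \<times> {1..n}) ({Suc t} \<times> {1..n}) (x, y)))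
           \<partial>PiM ({Suc t} \<times> {1..n}) (\<lambda>_. \<nu>)) \<partial>PiM ({1..t} \<times> {1..n}) (\<lambda>_. \<nu>))"
    unfolding split by (rule P.product_nn_integral_fold[rotated 3]) auto
  also have "\<dots> = (\<integral>\<^sup>+x. next_mean_integral n p G t (running_means n \<beta> t x) \<partial>PiM ({1..t} \<times> {1..n}) (\<lambda>_. \<nu>))"
    unfolding running_means_merge
    by (intro nn_integral_cong nn_integral_next_batch[OF assms])
       (erule measurable_space[OF measurable_running_means])
  finally show ?thesis .
qed

lemma nn_integral_running_means:
  assumes "G \<in> borel_measurable (PiM {1..t} (\<lambda>_. lborel))"
  shows "(\<integral>\<^sup>+X. G (running_means n \<beta> t X) \<partial>PiM ({1..t} \<times> {1..n}) (\<lambda>_. \<nu>))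
       = (\<integral>\<^sup>+m. G m * running_means_density n p t m \<partial>PiM {1..t} (\<lambda>_. lborel))"
  using assms
proof (induction t arbitrary: G)
  case 0
  interpret P: product_sigma_finite "\<lambda>_::nat \<times> nat. \<nu>" by (rule product_\<nu>)
  interpret L: product_sigma_finite "\<lambda>_::nat. (lborel :: 'v measure)" by standard
  have "running_means n \<beta> 0 X = (\<lambda>_. undefined)" for X
    by (simp add: running_means_def restrict_def)
  then show ?case
    by (simp add: P.nn_integral_empty L.nn_integral_empty running_means_density_def space_PiM_empty)
next
  case (Suc t)
  have "(\<integral>\<^sup>+X. G (running_means n \<beta> (Suc t) X) \<partial>PiM ({1..Suc t} \<times> {1..n}) (\<lambda>_. \<nu>))
      = (\<integral>\<^sup>+x. next_mean_integral n p G t (running_means n \<beta> t x) \<partial>PiM ({1..t} \<times> {1..n}) (\<lambda>_. \<nu>))"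
    by (rule nn_integral_running_means_Suc[OF Suc.prems])
  also have "\<dots> = (\<integral>\<^sup>+m. next_mean_integral n p G t m * running_means_density n p t m \<partial>PiM {1..t} (\<lambda>_. lborel))"
    by (rule Suc.IH[OF borel_measurable_next_mean_integral[OF p_meas Suc.prems]])
  also have "\<dots> = (\<integral>\<^sup>+m. G m * running_means_density n p (Suc t) m \<partial>PiM {1..Suc t} (\<lambda>_. lborel))"
    by (rule nn_integral_next_mean_integral[OF p_meas Suc.prems])
  finally show ?case .
qed

end

lemma running_means_density_change_one_batch:
  fixes m :: "nat \<Rightarrow> 'v::euclidean_space"
  assumes "tau \<in> {1..T}" and same: "\<And>s. s \<noteq> tau \<Longrightarrow> p1 s = p0 s"
    and fin: "running_means_density n p0 T m \<noteq> \<infinity>"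
    and nonzero: "\<And>s. s \<in> {1..T} \<Longrightarrow> ennreal ((real n * real s) ^ DIM('v)) * p0 s (batch_total n s m) \<noteq> 0"
  shows "running_means_density n p1 T m
       = running_means_density n p0 T m * (p1 tau (batch_total n tau m) / p0 tau (batch_total n tau m))"
proof -
  define f where "f = (\<lambda>p s. ennreal ((real n * real s) ^ DIM('v)) * p s (batch_total n s m))"
  have split: "running_means_density n p T m = (\<Prod>s\<in>{1..T} - {tau}. f p s) * f p tau" for p
    unfolding running_means_density_def f_def using assms(1)
    by (subst prod.remove[of _ tau]) (simp_all add: mult.commute)
  have rest: "(\<Prod>s\<in>{1..T} - {tau}. f p1 s) = (\<Prod>s\<in>{1..T} - {tau}. f p0 s)"
    unfolding f_def using same by (intro prod.cong) auto
  have "f p0 tau \<noteq> \<infinity>"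
    using fin nonzero assms(1) unfolding running_means_density_def f_def
    by (auto simp: ennreal_prod_eq_top)
  then have "p0 tau (batch_total n tau m) \<noteq> \<infinity>" "p0 tau (batch_total n tau m) \<noteq> 0"
    using nonzero[OF assms(1)] unfolding f_def by (auto simp: ennreal_mult_eq_top_iff)
  then have "p0 tau (batch_total n tau m) * (p1 tau (batch_total n tau m) / p0 tau (batch_total n tau m))
      = p1 tau (batch_total n tau m)"
    by (simp add: ennreal_times_divide mult.commute[of "p0 tau (batch_total n tau m)"] mult_divide_eq_ennreal)
  then have "f p1 tau = f p0 tau * (p1 tau (batch_total n tau m) / p0 tau (batch_total n tau m))"
    unfolding f_def by (simp add: mult.assoc)
  then show ?thesis unfolding split rest by (simp add: mult.assoc)
qed

section \<open>Likelihood ratios through a statistic\<close>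

lemma sigma_finite_PiM_lborel:
  "finite I \<Longrightarrow> sigma_finite_measure (PiM I (\<lambda>_. (lborel :: 'v::euclidean_space measure)))"
  by (intro product_sigma_finite.sigma_finite) unfold_locales

lemma distr_eq_densityI:
  assumes f[measurable]: "f \<in> measurable M N" and [measurable]: "F \<in> borel_measurable N"
    and law: "\<And>G. G \<in> borel_measurable N \<Longrightarrow> (\<integral>\<^sup>+x. G (f x) \<partial>M) = (\<integral>\<^sup>+y. G y * F y \<partial>N)"
  shows "distr M N f = density N F"
proof (rule measure_eqI)
  fix A assume "A \<in> sets (distr M N f)"
  then have [measurable]: "A \<in> sets N" by simp
  have "emeasure (distr M N f) A = (\<integral>\<^sup>+x. indicator A x \<partial>distr M N f)"
    by simp
  also have "\<dots> = (\<integral>\<^sup>+x. indicator A (f x) \<partial>M)"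
    by (rule nn_integral_distr) simp_all
  also have "\<dots> = emeasure (density N F) A"
    by (simp add: law emeasure_density mult.commute)
  finally show "emeasure (distr M N f) A = emeasure (density N F) A" .
qed simp

lemma AE_comp_of_AE_distr_density:
  assumes [measurable]: "f \<in> borel_measurable E" "V \<in> measurable E W" "Measurable.pred W P"
    and pos: "AE m in E. 0 < f m" and "AE w in distr (density E f) W V. P w"
  shows "AE m in E. P (V m)"
proof -
  have "AE m in E. 0 < f m \<longrightarrow> P (V m)"
    using assms(5) by (simp add: AE_distr_iff AE_density)
  with pos show ?thesis by eventually_elim simp
qed

lemma AE_finite_of_emeasure_density_finite:
  assumes "f \<in> borel_measurable E" and "emeasure (density E f) (space E) < \<infinity>"
  shows "AE m in E. f m \<noteq> \<infinity>"
proof (rule nn_integral_PInf_AE[OF assms(1)])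
  show "integral\<^sup>N E f \<noteq> \<infinity>" using assms by (simp add: emeasure_density)
qed

lemma AE_density_comp_pos_finite:
  assumes [measurable]: "f \<in> borel_measurable E" "V \<in> measurable E W" "h \<in> borel_measurable W"
    and pos: "AE m in E. 0 < f m" and fin: "emeasure (density E f) (space E) < \<infinity>"
    and law: "distr (density E f) W V = density W h"
  shows "AE m in E. 0 < h (V m) \<and> h (V m) < \<infinity>"
proof -
  have "emeasure (density W h) (space W) = emeasure (density E f) (space E)"
    unfolding law[symmetric] using measurable_space[OF assms(2)]
    by (subst emeasure_distr) (auto intro!: arg_cong2[where f=emeasure])
  then have "AE w in W. h w \<noteq> \<infinity>"
    using fin by (intro AE_finite_of_emeasure_density_finite) simp_all
  then have "AE w in distr (density E f) W V. 0 < h w \<and> h w < \<infinity>"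
    unfolding law by (auto simp: AE_density less_top elim!: eventually_mono)
  from AE_comp_of_AE_distr_density[OF _ _ _ pos this] show ?thesis by simp
qed

lemma density_ratio_through_statistic:
  assumes "sigma_finite_measure E" "sigma_finite_measure W"
    and [measurable]: "V \<in> measurable E W" "\<rho> \<in> borel_measurable W"
      "f0 \<in> borel_measurable E" "f1 \<in> borel_measurable E" "g0 \<in> borel_measurable W" "g1 \<in> borel_measurable W"
    and pos: "AE m in E. 0 < f0 m" and fin: "emeasure (density E f0) (space E) < \<infinity>"
    and f1: "density E f1 = density (density E f0) (\<lambda>m. \<rho> (V m))"
    and g0: "distr (density E f0) W V = density W g0"
    and g1: "distr (density E f1) W V = density W g1"
  shows "AE m in E. enn2real (f1 m) / enn2real (f0 m) = enn2real (g1 (V m)) / enn2real (g0 (V m))"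
proof -
  interpret E: sigma_finite_measure E by fact
  interpret W: sigma_finite_measure W by fact
  have "density E f1 = density E (\<lambda>m. f0 m * \<rho> (V m))"
    unfolding f1 by (simp add: density_density_eq)
  then have f1_eq: "AE m in E. f1 m = f0 m * \<rho> (V m)"
    by (intro E.density_unique) simp_all
  have "density W g1 = distr (density (density E f0) (\<lambda>m. \<rho> (V m))) W V"
    unfolding g1[symmetric] f1 ..
  also have "\<dots> = density (density W g0) \<rho>"
    unfolding g0[symmetric] by (simp add: density_distr)
  also have "\<dots> = density W (\<lambda>w. g0 w * \<rho> w)"
    by (simp add: density_density_eq)
  finally have "AE w in W. g1 w = g0 w * \<rho> w"
    by (intro W.density_unique) simp_all
  then have "AE w in distr (density E f0) W V. g1 w = g0 w * \<rho> w"
    unfolding g0 by (auto simp: AE_density elim!: eventually_mono)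
  from AE_comp_of_AE_distr_density[OF _ _ _ pos this]
  have g1_eq: "AE m in E. g1 (V m) = g0 (V m) * \<rho> (V m)" by simp
  have f0_fin: "AE m in E. f0 m \<noteq> \<infinity>"
    by (rule AE_finite_of_emeasure_density_finite[OF _ fin]) simp
  have g0_pos_fin: "AE m in E. 0 < g0 (V m) \<and> g0 (V m) < \<infinity>"
    by (rule AE_density_comp_pos_finite[OF _ _ _ pos fin g0]) simp_all
  show ?thesis
    using f1_eq g1_eq f0_fin g0_pos_fin pos
  proof eventually_elim
    case (elim m)
    then have "0 < enn2real (f0 m)" "0 < enn2real (g0 (V m))"
      by (auto simp: enn2real_positive_iff less_top)
    with elim show ?case by (simp add: enn2real_mult)
  qed
qed

lemma distr_density_of_distributed_comp:
  assumes "distributed M W (\<lambda>x. V (Y x)) g" and [measurable]: "Y \<in> measurable M E" "V \<in> measurable E W"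
    and "distr M E Y = density E f"
  shows "distr (density E f) W V = density W g"
proof -
  have "distr (density E f) W V = distr M W (\<lambda>x. V (Y x))"
    unfolding assms(4)[symmetric] by (simp add: distr_distr comp_def)
  then show ?thesis using assms(1) unfolding distributed_def by simp
qed

lemma emeasure_density_distributed_finite:
  assumes "finite_measure M" "distributed M E Y f"
  shows "emeasure (density E f) (space E) < \<infinity>"
proof -
  interpret finite_measure M by fact
  have Y: "Y \<in> measurable M E" using assms(2) by (rule distributed_measurable)
  have "emeasure (density E f) (space E) = emeasure (distr M E Y) (space E)"
    using assms(2) by (simp add: distributed_distr_eq_density)
  also have "\<dots> = emeasure M (space M)"
    using measurable_space[OF Y] by (subst emeasure_distr[OF Y]) (auto intro!: arg_cong2[where f=emeasure])
  finally show ?thesis by (simp add: less_top[symmetric])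
qed

lemma likelihood_ratio_through_statistic:
  assumes "sigma_finite_measure E" "sigma_finite_measure W" "finite_measure M"
    and [measurable]: "V \<in> measurable E W" "\<rho> \<in> borel_measurable W"
    and pos: "AE m in E. 0 < f0 m"
    and ratio: "distr N E Y = density (distr M E Y) (\<lambda>m. \<rho> (V m))"
    and f0: "distributed M E Y f0" and f1: "distributed N E Y f1"
    and g0: "distributed M W (\<lambda>x. V (Y x)) g0" and g1: "distributed N W (\<lambda>x. V (Y x)) g1"
  shows "AE m in E. enn2real (f1 m) / enn2real (f0 m) = enn2real (g1 (V m)) / enn2real (g0 (V m))"
proof (rule density_ratio_through_statistic[OF assms(1,2,4,5) _ _ _ _ pos])
  note [measurable] = distributed_measurable[OF f0] distributed_measurable[OF f1]
  show "emeasure (density E f0) (space E) < \<infinity>"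
    by (rule emeasure_density_distributed_finite[OF assms(3) f0])
  show "density E f1 = density (density E f0) (\<lambda>m. \<rho> (V m))"
    using ratio f0 f1 by (simp add: distributed_distr_eq_density)
  show "distr (density E f0) W V = density W g0"
    by (rule distr_density_of_distributed_comp[where V=V and Y=Y, OF g0])
       (simp_all add: distributed_distr_eq_density[OF f0])
  show "distr (density E f1) W V = density W g1"
    using distr_density_of_distributed_comp[where V=V and Y=Y, OF g1, of E f1] f0 f1
    by (simp add: distributed_distr_eq_density)
qed (use f0 f1 g0 g1 in \<open>simp_all add: distributed_borel_measurable\<close>)

lemma AE_marginal_density_eq:
  assumes "finite_measure M" and [measurable]: "A \<in> borel_measurable E"
    and pos: "AE m in E. 0 < f0 m" and f0: "distributed M E Y f0"
    and h0: "distributed M lborel (\<lambda>x. A (Y x)) h0" and h1: "distributed N lborel (\<lambda>x. A (Y x)) h1"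
    and marg: "distr N lborel (\<lambda>x. A (Y x)) = distr M lborel (\<lambda>x. A (Y x))"
  shows "AE m in E. h1 (A m) = h0 (A m) \<and> 0 < h0 (A m) \<and> h0 (A m) < \<infinity>"
proof -
  note [measurable] = distributed_measurable[OF f0] distributed_borel_measurable[OF f0]
    distributed_borel_measurable[OF h0] distributed_borel_measurable[OF h1]
  have h0_law: "distr (density E f0) lborel A = density lborel h0"
    by (rule distr_density_of_distributed_comp[where V=A and Y=Y, OF h0])
       (simp_all add: distributed_distr_eq_density[OF f0])
  have "density lborel h1 = density lborel h0"
    using h0 h1 marg unfolding distributed_def by simp
  then have "AE a in lborel. h1 a = h0 a"
    by (intro sigma_finite_measure.density_unique[OF lborel.sigma_finite_measure_axioms]) simp_all
  then have "AE a in distr (density E f0) lborel A. h1 a = h0 a"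
    unfolding h0_law by (auto simp: AE_density elim!: eventually_mono)
  from AE_comp_of_AE_distr_density[OF _ _ _ pos this]
  have "AE m in E. h1 (A m) = h0 (A m)" by simp
  moreover have "AE m in E. 0 < h0 (A m) \<and> h0 (A m) < \<infinity>"
    by (rule AE_density_comp_pos_finite[OF _ _ _ pos
          emeasure_density_distributed_finite[OF assms(1) f0] h0_law]) simp_all
  ultimately show ?thesis by eventually_elim simp
qed

lemma cond_density_ratio_eq:
  assumes "sigma_finite_measure E" "finite_measure M"
    and [measurable]: "A \<in> measurable E lborel" "B \<in> measurable E lborel"
      "\<rho> \<in> borel_measurable (lborel \<Otimes>\<^sub>M lborel)"
    and pos: "AE m in E. 0 < f0 m"
    and ratio: "distr N E Y = density (distr M E Y) (\<lambda>m. \<rho> (A m, B m))"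
    and marg: "distr N lborel (\<lambda>x. A (Y x)) = distr M lborel (\<lambda>x. A (Y x))"
    and f0: "distributed M E Y f0" and f1: "distributed N E Y f1"
    and q0: "cond_density M (\<lambda>x. A (Y x)) (\<lambda>x. B (Y x)) q0"
    and q1: "cond_density N (\<lambda>x. A (Y x)) (\<lambda>x. B (Y x)) q1"
  shows "AE m in E. enn2real (f1 m) / enn2real (f0 m) = q1 (A m) (B m) / q0 (A m) (B m)"
proof -
  obtain g0 h0 where g0: "distributed M (lborel \<Otimes>\<^sub>M lborel) (\<lambda>x. (A (Y x), B (Y x))) g0"
    and h0: "distributed M lborel (\<lambda>x. A (Y x)) h0" and q0: "\<And>a b. q0 a b = enn2real (g0 (a, b)) / enn2real (h0 a)"
    using q0 unfolding cond_density_def by blast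
  obtain g1 h1 where g1: "distributed N (lborel \<Otimes>\<^sub>M lborel) (\<lambda>x. (A (Y x), B (Y x))) g1"
    and h1: "distributed N lborel (\<lambda>x. A (Y x)) h1" and q1: "\<And>a b. q1 a b = enn2real (g1 (a, b)) / enn2real (h1 a)"
    using q1 unfolding cond_density_def by blast
  have "AE m in E. enn2real (f1 m) / enn2real (f0 m) = enn2real (g1 (A m, B m)) / enn2real (g0 (A m, B m))"
    using likelihood_ratio_through_statistic[OF assms(1) _ assms(2) _ _ pos _ f0 f1 g0 g1, of "\<lambda>(a, b). \<rho> (a, b)"]
      ratio by (simp add: sigma_finite_pair_measure lborel.sigma_finite_measure_axioms)
  moreover have "AE m in E. h1 (A m) = h0 (A m) \<and> 0 < h0 (A m) \<and> h0 (A m) < \<infinity>"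
    using assms(3) by (intro AE_marginal_density_eq[OF assms(2) _ pos f0 h0 h1 marg]) simp
  ultimately show ?thesis
  proof eventually_elim
    case (elim m)
    then have "0 < enn2real (h0 (A m))" by (simp add: enn2real_positive_iff)
    with elim show ?case by (simp add: q0 q1)
  qed
qed

lemma marg_density_ratio_eq:
  assumes "sigma_finite_measure E" "finite_measure M"
    and [measurable]: "B \<in> measurable E lborel" "\<rho> \<in> borel_measurable lborel"
    and pos: "AE m in E. 0 < f0 m"
    and ratio: "distr N E Y = density (distr M E Y) (\<lambda>m. \<rho> (B m))"
    and f0: "distributed M E Y f0" and f1: "distributed N E Y f1"
    and q0: "marg_as_cond_density M (\<lambda>x. B (Y x)) q0"
    and q1: "marg_as_cond_density N (\<lambda>x. B (Y x)) q1"
  shows "AE m in E. enn2real (f1 m) / enn2real (f0 m) = q1 (A m) (B m) / q0 (A m) (B m)"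
proof -
  obtain g0 where g0: "distributed M lborel (\<lambda>x. B (Y x)) g0" and "\<And>a b. q0 a b = enn2real (g0 b)"
    using q0 unfolding marg_as_cond_density_def by blast
  moreover obtain g1 where g1: "distributed N lborel (\<lambda>x. B (Y x)) g1" and "\<And>a b. q1 a b = enn2real (g1 b)"
    using q1 unfolding marg_as_cond_density_def by blast
  ultimately show ?thesis
    using likelihood_ratio_through_statistic[OF assms(1) lborel.sigma_finite_measure_axioms assms(2-6) f0 f1 g0 g1]
    by simp
qed

section \<open>Running means of i.i.d. data\<close>

definition batch_sum :: "nat \<Rightarrow> nat \<Rightarrow> (nat \<times> nat \<Rightarrow> 'v) \<Rightarrow> 'v::real_vector" where
  "batch_sum n r X = (\<Sum>k\<in>{1..n}. X (r, k))"

text \<open>The factor \<open>\<integral>\<phi>\<close> is the mass of the discarded point (\<open>1\<close> for a probability density).\<close>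
definition replaced_batch_density ::
  "nat \<Rightarrow> nat \<Rightarrow> 'v \<Rightarrow> ('v::euclidean_space \<Rightarrow> ennreal) \<Rightarrow> nat \<Rightarrow> 'v \<Rightarrow> ennreal"
where
  "replaced_batch_density n tau z \<phi> r =
     (if r = tau then (\<lambda>b. (\<integral>\<^sup>+x. \<phi> x \<partial>lborel) * conv_pow \<phi> (n - 2) (b - z))
      else conv_pow \<phi> (n - 1))"

lemma borel_measurable_replaced_batch_density[measurable]:
  "\<phi> \<in> borel_measurable borel \<Longrightarrow> replaced_batch_density n tau z \<phi> r \<in> borel_measurable borel"
  unfolding replaced_batch_density_def by simp

lemma muhat_vec_eq_running_means: "muhat_vec n T X = running_means n (batch_sum n) T X"
  unfolding muhat_vec_def running_means_def muhat_def batch_sum_def ..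

lemma muhat_vec_fun_upd_eq_running_means:
  "muhat_vec n T (X(i := z)) = running_means n (\<lambda>r X. batch_sum n r (X(i := z))) T X"
  unfolding muhat_vec_def running_means_def muhat_def batch_sum_def ..

lemma muhat_vec_apply: "s \<in> {1..T} \<Longrightarrow> muhat_vec n T X s = muhat n X s"
  unfolding muhat_vec_def by simp

lemma batch_sum_eq_sum: "batch_sum n r X = (\<Sum>i\<in>{r} \<times> {1..n}. X i)"
proof -
  have "{r} \<times> {1..n} = Pair r ` {1..n}" by auto
  then show ?thesis unfolding batch_sum_def by (simp add: sum.reindex inj_on_def)
qed

lemma batch_sum_cong:
  "(\<And>k. k \<in> {1..n} \<Longrightarrow> X (r, k) = Y (r, k)) \<Longrightarrow> batch_sum n r X = batch_sum n r Y"
  unfolding batch_sum_def by (intro sum.cong) auto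

lemma batch_sum_fun_upd_cong:
  "(\<And>k. k \<in> {1..n} \<Longrightarrow> X (r, k) = Y (r, k)) \<Longrightarrow> batch_sum n r (X(i := z)) = batch_sum n r (Y(i := z))"
  by (rule batch_sum_cong) simp

lemma borel_measurable_batch_sum:
  assumes "sets M = sets borel"
  shows "batch_sum n r \<in> borel_measurable (PiM ({r} \<times> {1..n}) (\<lambda>_. M :: 'v::euclidean_space measure))"
  unfolding batch_sum_def
proof (intro borel_measurable_sum)
  fix k assume "k \<in> {1..n}"
  then have "(\<lambda>X. X (r, k)) \<in> measurable (PiM ({r} \<times> {1..n}) (\<lambda>_. M)) M"
    by (intro measurable_component_singleton) auto
  then show "(\<lambda>X. X (r, k)) \<in> borel_measurable (PiM ({r} \<times> {1..n}) (\<lambda>_. M))"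
    unfolding measurable_cong_sets[OF refl assms, symmetric] .
qed

lemma borel_measurable_batch_sum_fun_upd:
  assumes "sets M = sets borel"
  shows "(\<lambda>X. batch_sum n r (X(i := z)))
           \<in> borel_measurable (PiM ({r} \<times> {1..n}) (\<lambda>_. M :: 'v::euclidean_space measure))"
  unfolding batch_sum_def
proof (intro borel_measurable_sum)
  fix k assume "k \<in> {1..n}"
  then have "(\<lambda>X. X (r, k)) \<in> measurable (PiM ({r} \<times> {1..n}) (\<lambda>_. M)) M"
    by (intro measurable_component_singleton) auto
  then have "(\<lambda>X. X (r, k)) \<in> borel_measurable (PiM ({r} \<times> {1..n}) (\<lambda>_. M))"
    unfolding measurable_cong_sets[OF refl assms, symmetric] .
  then show "(\<lambda>X. (X(i := z)) (r, k)) \<in> borel_measurable (PiM ({r} \<times> {1..n}) (\<lambda>_. M))"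
    by (cases "(r, k) = i") simp_all
qed

context
  fixes \<phi> :: "'v::euclidean_space \<Rightarrow> ennreal"
  assumes \<phi>_meas[measurable]: "\<phi> \<in> borel_measurable borel"
    and \<phi>_fin: "(\<integral>\<^sup>+x. \<phi> x \<partial>lborel) < \<infinity>"
begin

lemma nn_integral_batch_sum:
  assumes "0 < n" and "G \<in> borel_measurable borel"
  shows "(\<integral>\<^sup>+X. G (batch_sum n r X) \<partial>PiM ({r} \<times> {1..n}) (\<lambda>_. density lborel \<phi>))
       = (\<integral>\<^sup>+b. G b * conv_pow \<phi> (n - 1) b \<partial>lborel)"
  using nn_integral_PiM_sum[OF \<phi>_meas \<phi>_fin, of "{r} \<times> {1..n}" G] assms
  by (simp add: batch_sum_eq_sum card_cartesian_product)

lemma nn_integral_batch_sum_fun_upd: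
  assumes "2 \<le> n" "j \<in> {1..n}" and [measurable]: "G \<in> borel_measurable borel"
  shows "(\<integral>\<^sup>+X. G (batch_sum n r (X((tau, j) := z))) \<partial>PiM ({r} \<times> {1..n}) (\<lambda>_. density lborel \<phi>))
       = (\<integral>\<^sup>+b. G b * replaced_batch_density n tau z \<phi> r b \<partial>lborel)"
proof (cases "r = tau")
  case False
  then have "batch_sum n r (X((tau, j) := z)) = batch_sum n r X" for X
    unfolding batch_sum_def by (intro sum.cong) auto
  then show ?thesis
    using nn_integral_batch_sum[of n G r] False assms by (simp add: replaced_batch_density_def)
next
  case True
  have "(tau, j) \<in> {r} \<times> {1..n}" using True assms(2) by simp
  then have card: "card ({r} \<times> {1..n} - {(tau, j)}) = n - 1"
    by (simp add: card_cartesian_product)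
  have "{r} \<times> {1..n} - {(tau, j)} \<noteq> {}"
  proof
    assume "{r} \<times> {1..n} - {(tau, j)} = {}"
    then have "card ({r} \<times> {1..n} - {(tau, j)}) = 0" by simp
    with card assms(1) show False by simp
  qed
  then show ?thesis
    using nn_integral_PiM_sum_fun_upd[OF \<phi>_meas \<phi>_fin, of "{r} \<times> {1..n}" "(tau, j)" G z] True assms
    by (simp add: batch_sum_eq_sum card_cartesian_product replaced_batch_density_def)
qed

end

lemma borel_measurable_muhat:
  assumes "sets M = sets borel" and "s \<le> T"
  shows "(\<lambda>X. muhat n X s) \<in> borel_measurable (PiM ({1..T} \<times> {1..n}) (\<lambda>_. M :: (real^'d) measure))"
  unfolding muhat_def
proof (intro borel_measurable_scaleR borel_measurable_const borel_measurable_sum)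
  fix j k assume "j \<in> {1..s}" "k \<in> {1..n}"
  then have "(\<lambda>X. X (j, k)) \<in> measurable (PiM ({1..T} \<times> {1..n}) (\<lambda>_. M)) M"
    using assms(2) by (intro measurable_component_singleton) auto
  then show "(\<lambda>X. X (j, k)) \<in> borel_measurable (PiM ({1..T} \<times> {1..n}) (\<lambda>_. M))"
    unfolding measurable_cong_sets[OF refl assms(1), symmetric] .
qed

lemma measurable_muhat_vec:
  assumes "sets M = sets borel"
  shows "muhat_vec n T \<in> measurable (PiM ({1..T} \<times> {1..n}) (\<lambda>_. M :: (real^'d) measure))
           (PiM {1..T} (\<lambda>_. lborel))"
  unfolding muhat_vec_def by (rule measurable_restrict) (use borel_measurable_muhat[OF assms] in simp)

context
  fixes \<phi> :: "real^'d \<Rightarrow> ennreal"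
  assumes \<phi>_meas[measurable]: "\<phi> \<in> borel_measurable borel"
    and \<phi>_fin: "(\<integral>\<^sup>+x. \<phi> x \<partial>lborel) < \<infinity>"
begin

lemma nn_integral_muhat_vec_iid:
  assumes "0 < n" and "G \<in> borel_measurable (PiM {1..T} (\<lambda>_. lborel))"
  shows "(\<integral>\<^sup>+X. G (muhat_vec n T X) \<partial>PiM ({1..T} \<times> {1..n}) (\<lambda>_. density lborel \<phi>))
       = (\<integral>\<^sup>+m. G m * running_means_density n (\<lambda>_. conv_pow \<phi> (n - 1)) T m \<partial>PiM {1..T} (\<lambda>_. lborel))"
proof -
  have sets: "sets (density lborel \<phi>) = sets borel" by simp
  show ?thesis
    unfolding muhat_vec_eq_running_means
    by (rule nn_integral_running_means[OF product_sigma_finite_density_lborel[OF \<phi>_meas \<phi>_fin] sets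
          assms(1) batch_sum_cong borel_measurable_batch_sum[OF sets]
          nn_integral_batch_sum[OF \<phi>_meas \<phi>_fin assms(1)] _ assms(2)])
       auto
qed

lemma nn_integral_muhat_vec_iid_fun_upd:
  assumes "2 \<le> n" "j \<in> {1..n}" and "G \<in> borel_measurable (PiM {1..T} (\<lambda>_. lborel))"
  shows "(\<integral>\<^sup>+X. G (muhat_vec n T (X((tau, j) := z))) \<partial>PiM ({1..T} \<times> {1..n}) (\<lambda>_. density lborel \<phi>))
       = (\<integral>\<^sup>+m. G m * running_means_density n (replaced_batch_density n tau z \<phi>) T m \<partial>PiM {1..T} (\<lambda>_. lborel))"
proof -
  have sets: "sets (density lborel \<phi>) = sets borel" by simp
  have "0 < n" using assms by simp
  show ?thesis
    unfolding muhat_vec_fun_upd_eq_running_means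
    by (intro nn_integral_running_means[OF product_sigma_finite_density_lborel[OF \<phi>_meas \<phi>_fin] sets
          \<open>0 < n\<close> batch_sum_fun_upd_cong borel_measurable_batch_sum_fun_upd[OF sets]
          nn_integral_batch_sum_fun_upd[OF \<phi>_meas \<phi>_fin assms(1,2)] _ assms(3)])
       simp_all
qed

end

section \<open>The Gaussian change-point model\<close>

abbreviation mvn :: "real^'d \<Rightarrow> real^'d^'d \<Rightarrow> real^'d \<Rightarrow> ennreal" where
  "mvn mu S \<equiv> \<lambda>x. ennreal (mvn_density mu S x)"

text \<open>The map \<open>(X, j) \<mapsto> X((tau, j) := z)\<close> in \<^const>\<open>data_H1\<close> is not measurable: it leaves
  the extensional function space when \<open>j \<notin> {1..n}\<close>. This variant agrees with it on the full
  measure set \<open>j \<in> {1..n}\<close>.\<close>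
definition replace_point :: "nat \<Rightarrow> nat \<Rightarrow> 'v \<Rightarrow> (nat \<times> nat \<Rightarrow> 'v) \<times> nat \<Rightarrow> nat \<times> nat \<Rightarrow> 'v" where
  "replace_point n tau z = (\<lambda>(X, j). if j \<in> {1..n} then X((tau, j) := z) else X)"

lemma borel_measurable_mvn: "mvn mu S \<in> borel_measurable borel"
  by simp

context
  fixes mu :: "real^'d" and S :: "real^'d^'d" and n T tau :: nat and z :: "real^'d"
  assumes S: "pos_def_mat S" and n: "2 \<le> n" and tau: "tau \<in> {1..T}"
begin

lemma product_sigma_finite_mvn: "product_sigma_finite (\<lambda>_::'i. density lborel (mvn mu S))"
  by (rule product_sigma_finite_density_lborel) (use nn_integral_mvn_density_finite[OF S] in simp_all)

lemma finite_measure_data_H0: "finite_measure (data_H0 n T mu S)"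
proof -
  interpret product_sigma_finite "\<lambda>_::nat \<times> nat. density lborel (mvn mu S)"
    by (rule product_sigma_finite_mvn)
  have "emeasure (data_H0 n T mu S) (space (data_H0 n T mu S))
      = (\<Prod>i\<in>{1..T} \<times> {1..n}. emeasure (density lborel (mvn mu S)) UNIV)"
    unfolding data_H0_def space_PiM by (subst emeasure_PiM) auto
  also have "\<dots> < \<infinity>"
    using nn_integral_mvn_density_finite[OF S] by (simp add: emeasure_density power_less_top_ennreal)
  finally show ?thesis by (intro finite_measureI) simp
qed

lemma sets_data_H0: "sets (data_H0 n T mu S) = sets (PiM ({1..T} \<times> {1..n}) (\<lambda>_. lborel))"
  unfolding data_H0_def by (intro sets_PiM_cong) simp_all

lemma measurable_replace_point:
  "replace_point n tau z \<in> measurable (data_H0 n T mu S \<Otimes>\<^sub>M uniform_measure (count_space UNIV) {1..n})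
     (PiM ({1..T} \<times> {1..n}) (\<lambda>_. lborel))"
proof -
  let ?M = "data_H0 n T mu S \<Otimes>\<^sub>M uniform_measure (count_space UNIV) {1..n}"
  have eq: "replace_point n tau z = (\<lambda>x i. if snd x \<in> {1..n} \<and> i = (tau, snd x) then z else fst x i)"
    unfolding replace_point_def by (auto simp: fun_eq_iff)
  show ?thesis unfolding eq
  proof (rule measurable_PiM_single')
    fix i :: "nat \<times> nat" assume "i \<in> {1..T} \<times> {1..n}"
    then have "(\<lambda>X. X i) \<in> measurable (data_H0 n T mu S) lborel"
      unfolding measurable_cong_sets[OF sets_data_H0 refl] by (intro measurable_component_singleton)
    then have [measurable]: "(\<lambda>x. fst x i) \<in> measurable ?M lborel"
      by (rule measurable_compose[OF measurable_fst])
    have [measurable]: "{x \<in> space ?M. snd x \<in> {1..n} \<and> i = (tau, snd x)} \<in> sets ?M"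
    proof -
      have "{x \<in> space ?M. snd x \<in> {1..n} \<and> i = (tau, snd x)}
          = space (data_H0 n T mu S) \<times> {j. j \<in> {1..n} \<and> i = (tau, j)}"
        by (auto simp: space_pair_measure)
      then show ?thesis by simp
    qed
    show "(\<lambda>x. if snd x \<in> {1..n} \<and> i = (tau, snd x) then z else fst x i) \<in> measurable ?M lborel"
      by measurable
  next
    show "(\<lambda>x i. if snd x \<in> {1..n} \<and> i = (tau, snd x) then z else fst x i)
        \<in> space ?M \<rightarrow> (\<Pi>\<^sub>E i\<in>{1..T} \<times> {1..n}. space lborel)"
      using tau by (auto simp: space_pair_measure data_H0_def space_PiM PiE_def extensional_def)
  qed
qed

lemma prob_space_uniform_batch_index: "prob_space (uniform_measure (count_space UNIV) {1..n})"
  using n by (intro prob_space_uniform_measure) auto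

lemma vimage_fun_upd_eq_replace_point:
  assumes "z \<noteq> undefined" and "A \<in> sets (PiM ({1..T} \<times> {1..n}) (\<lambda>_. lborel))"
  defines "M \<equiv> data_H0 n T mu S \<Otimes>\<^sub>M uniform_measure (count_space UNIV) {1..n}"
  shows "(\<lambda>(X, j). X((tau, j) := z)) -` A \<inter> space M
       = (replace_point n tau z -` A \<inter> space M) - space (data_H0 n T mu S) \<times> (UNIV - {1..n})"
proof (intro set_eqI iffI)
  fix x assume x: "x \<in> (\<lambda>(X, j). X((tau, j) := z)) -` A \<inter> space M"
  obtain X j where x_eq: "x = (X, j)" by (cases x)
  have "X((tau, j) := z) \<in> space (PiM ({1..T} \<times> {1..n}) (\<lambda>_. (lborel :: (real^'d) measure)))"
    using x x_eq sets.sets_into_space[OF assms(2)] by auto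
  then have "j \<in> {1..n}" using assms(1) tau
    by (auto simp: space_PiM PiE_def extensional_def split: if_splits dest!: spec[of _ "(tau, j)"])
  then show "x \<in> (replace_point n tau z -` A \<inter> space M) - space (data_H0 n T mu S) \<times> (UNIV - {1..n})"
    using x x_eq unfolding replace_point_def by auto
next
  fix x assume "x \<in> (replace_point n tau z -` A \<inter> space M) - space (data_H0 n T mu S) \<times> (UNIV - {1..n})"
  then show "x \<in> (\<lambda>(X, j). X((tau, j) := z)) -` A \<inter> space M"
    unfolding replace_point_def M_def by (auto simp: space_pair_measure)
qed

lemma data_H1_eq_distr_replace_point:
  "data_H1 n T mu S z tau = distr (data_H0 n T mu S \<Otimes>\<^sub>M uniform_measure (count_space UNIV) {1..n})
     (PiM ({1..T} \<times> {1..n}) (\<lambda>_. lborel)) (replace_point n tau z)"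
proof (cases "z = undefined")
  case True
  show ?thesis unfolding data_H1_def
  proof (rule distr_cong)
    fix x assume "x \<in> space (data_H0 n T mu S \<Otimes>\<^sub>M uniform_measure (count_space UNIV) {1..n})"
    then obtain X j where x: "x = (X, j)" "X \<in> space (data_H0 n T mu S)"
      by (auto simp: space_pair_measure)
    then have "j \<notin> {1..n} \<Longrightarrow> X (tau, j) = undefined"
      unfolding data_H0_def by (auto simp: space_PiM PiE_def extensional_def)
    then show "(case x of (X, j) \<Rightarrow> X((tau, j) := z)) = replace_point n tau z x"
      unfolding x replace_point_def using True by auto
  qed simp_all
next
  case False
  let ?U = "uniform_measure (count_space UNIV) {1..n}"
  let ?M = "data_H0 n T mu S \<Otimes>\<^sub>M ?U"
  let ?N = "PiM ({1..T} \<times> {1..n}) (\<lambda>_. (lborel :: (real^'d) measure))"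
  interpret U: prob_space ?U by (rule prob_space_uniform_batch_index)
  have "emeasure ?M (space (data_H0 n T mu S) \<times> (UNIV - {1..n}))
      = emeasure (data_H0 n T mu S) (space (data_H0 n T mu S)) * emeasure ?U (UNIV - {1..n})"
    by (rule U.emeasure_pair_measure_Times) simp_all
  then have null: "space (data_H0 n T mu S) \<times> (UNIV - {1..n}) \<in> null_sets ?M"
    by (simp add: null_sets_def)
  have "emeasure ?M ((\<lambda>(X, j). X((tau, j) := z)) -` A \<inter> space ?M)
      = emeasure ?M (replace_point n tau z -` A \<inter> space ?M)" if "A \<in> sets ?N" for A
    unfolding vimage_fun_upd_eq_replace_point[OF False that]
    by (rule emeasure_Diff_null_set[OF null measurable_sets[OF measurable_replace_point that]])
  then show ?thesis
    unfolding data_H1_def distr_def by (intro measure_of_eq sets.space_closed) (simp add: sets.sigma_sets_eq)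
qed

lemma distributed_muhat_vec_H0:
  "distributed (data_H0 n T mu S) (PiM {1..T} (\<lambda>_. lborel)) (muhat_vec n T)
     (running_means_density n (\<lambda>_. conv_pow (mvn mu S) (n - 1)) T)"
  unfolding distributed_def
proof (intro conjI)
  show Y: "muhat_vec n T \<in> measurable (data_H0 n T mu S) (PiM {1..T} (\<lambda>_. lborel))"
    unfolding data_H0_def by (rule measurable_muhat_vec) simp
  show F: "running_means_density n (\<lambda>_. conv_pow (mvn mu S) (n - 1)) T
      \<in> borel_measurable (PiM {1..T} (\<lambda>_. lborel))"
    by (intro borel_measurable_running_means_density borel_measurable_conv_pow) simp
  show "distr (data_H0 n T mu S) (PiM {1..T} (\<lambda>_. lborel)) (muhat_vec n T)
      = density (PiM {1..T} (\<lambda>_. lborel)) (running_means_density n (\<lambda>_. conv_pow (mvn mu S) (n - 1)) T)"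
  proof (rule distr_eq_densityI[OF Y F])
    fix G :: "(nat \<Rightarrow> real^'d) \<Rightarrow> ennreal" assume "G \<in> borel_measurable (PiM {1..T} (\<lambda>_. lborel))"
    then show "(\<integral>\<^sup>+X. G (muhat_vec n T X) \<partial>data_H0 n T mu S)
        = (\<integral>\<^sup>+m. G m * running_means_density n (\<lambda>_. conv_pow (mvn mu S) (n - 1)) T m
            \<partial>PiM {1..T} (\<lambda>_. lborel))"
      unfolding data_H0_def using n
      by (intro nn_integral_muhat_vec_iid[OF borel_measurable_mvn nn_integral_mvn_density_finite[OF S]]) simp_all
  qed
qed

lemma measurable_muhat_vec_replace_point:
  "muhat_vec n T \<circ> replace_point n tau z \<in> measurable
     (data_H0 n T mu S \<Otimes>\<^sub>M uniform_measure (count_space UNIV) {1..n}) (PiM {1..T} (\<lambda>_. lborel))"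
  by (rule measurable_comp[OF measurable_replace_point measurable_muhat_vec]) simp

lemma nn_integral_muhat_vec_replace_point:
  assumes G: "G \<in> borel_measurable (PiM {1..T} (\<lambda>_. lborel))"
  shows "(\<integral>\<^sup>+x. G ((muhat_vec n T \<circ> replace_point n tau z) x)
            \<partial>(data_H0 n T mu S \<Otimes>\<^sub>M uniform_measure (count_space UNIV) {1..n}))
       = (\<integral>\<^sup>+m. G m * running_means_density n (replaced_batch_density n tau z (mvn mu S)) T m
            \<partial>PiM {1..T} (\<lambda>_. lborel))" (is "_ = ?I")
proof -
  let ?U = "uniform_measure (count_space UNIV) {1..n}"
  interpret finite_measure "data_H0 n T mu S" by (rule finite_measure_data_H0)
  interpret U: prob_space ?U by (rule prob_space_uniform_batch_index)
  interpret pair_sigma_finite "data_H0 n T mu S" ?U ..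
  have "(\<integral>\<^sup>+X. G ((muhat_vec n T \<circ> replace_point n tau z) (X, j)) \<partial>data_H0 n T mu S) = ?I"
    if "j \<in> {1..n}" for j
  proof -
    have "(muhat_vec n T \<circ> replace_point n tau z) (X, j) = muhat_vec n T (X((tau, j) := z))" for X
      using that by (simp add: replace_point_def)
    then show ?thesis
      unfolding data_H0_def
      by (simp only:) (rule nn_integral_muhat_vec_iid_fun_upd[OF borel_measurable_mvn
          nn_integral_mvn_density_finite[OF S] n that G])
  qed
  then have "AE j in ?U. (\<integral>\<^sup>+X. G ((muhat_vec n T \<circ> replace_point n tau z) (X, j)) \<partial>data_H0 n T mu S) = ?I"
    by (intro AE_uniform_measureI) simp_all
  then have "(\<integral>\<^sup>+j. (\<integral>\<^sup>+X. G ((muhat_vec n T \<circ> replace_point n tau z) (X, j)) \<partial>data_H0 n T mu S) \<partial>?U)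
      = (\<integral>\<^sup>+j. ?I \<partial>?U)"
    by (rule nn_integral_cong_AE)
  also have "\<dots> = ?I"
    by (simp only: nn_integral_const U.emeasure_space_1 mult_1_right)
  finally show ?thesis
    by (simp only: nn_integral_snd[OF measurable_compose[OF measurable_muhat_vec_replace_point G]])
qed

lemma distr_muhat_vec_H1:
  "distr (data_H1 n T mu S z tau) (PiM {1..T} (\<lambda>_. lborel)) (muhat_vec n T)
     = density (PiM {1..T} (\<lambda>_. lborel)) (running_means_density n (replaced_batch_density n tau z (mvn mu S)) T)"
proof -
  have "muhat_vec n T \<in> measurable (PiM ({1..T} \<times> {1..n}) (\<lambda>_. lborel)) (PiM {1..T} (\<lambda>_. lborel))"
    by (rule measurable_muhat_vec) simp
  then have "distr (data_H1 n T mu S z tau) (PiM {1..T} (\<lambda>_. lborel)) (muhat_vec n T)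
      = distr (data_H0 n T mu S \<Otimes>\<^sub>M uniform_measure (count_space UNIV) {1..n}) (PiM {1..T} (\<lambda>_. lborel))
          (muhat_vec n T \<circ> replace_point n tau z)"
    unfolding data_H1_eq_distr_replace_point by (rule distr_distr[OF _ measurable_replace_point])
  also have "\<dots> = density (PiM {1..T} (\<lambda>_. lborel))
      (running_means_density n (replaced_batch_density n tau z (mvn mu S)) T)"
    by (rule distr_eq_densityI[OF measurable_muhat_vec_replace_point _ nn_integral_muhat_vec_replace_point])
       (intro borel_measurable_running_means_density borel_measurable_replaced_batch_density, simp)
  finally show ?thesis .
qed

lemma distr_muhat_H1_eq_H0:
  assumes "s < tau"
  shows "distr (data_H1 n T mu S z tau) lborel (\<lambda>X. muhat n X s)
       = distr (data_H0 n T mu S) lborel (\<lambda>X. muhat n X s)"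
proof -
  let ?U = "uniform_measure (count_space UNIV) {1..n}"
  interpret finite_measure "data_H0 n T mu S" by (rule finite_measure_data_H0)
  interpret U: prob_space ?U by (rule prob_space_uniform_batch_index)
  have "s \<le> T" using assms tau by auto
  have muhat: "(\<lambda>X::nat \<times> nat \<Rightarrow> real^'d. muhat n X s) \<in> borel_measurable (PiM ({1..T} \<times> {1..n}) (\<lambda>_. lborel))"
    by (rule borel_measurable_muhat[OF _ \<open>s \<le> T\<close>]) simp
  then have [measurable]: "(\<lambda>X. muhat n X s) \<in> borel_measurable (data_H0 n T mu S)"
    unfolding measurable_cong_sets[OF sets_data_H0 refl] .
  have "muhat n (X((tau, j) := z)) s = muhat n X s" for X j
    unfolding muhat_def using assms by (intro arg_cong[where f="\<lambda>v. _ *\<^sub>R v"] sum.cong refl) auto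
  then have "(\<lambda>X. muhat n X s) \<circ> replace_point n tau z = (\<lambda>X. muhat n X s) \<circ> fst"
    by (auto simp: replace_point_def)
  have "distr (data_H1 n T mu S z tau) lborel (\<lambda>X. muhat n X s)
      = distr (data_H0 n T mu S \<Otimes>\<^sub>M ?U) lborel ((\<lambda>X. muhat n X s) \<circ> replace_point n tau z)"
    unfolding data_H1_eq_distr_replace_point
    by (rule distr_distr[OF _ measurable_replace_point]) (use muhat in simp)
  also have "\<dots> = distr (data_H0 n T mu S \<Otimes>\<^sub>M ?U) lborel ((\<lambda>X. muhat n X s) \<circ> fst)"
    unfolding \<open>_ \<circ> replace_point n tau z = _\<close> ..
  also have "\<dots> = distr (distr (data_H0 n T mu S \<Otimes>\<^sub>M ?U) (data_H0 n T mu S) fst) lborel (\<lambda>X. muhat n X s)"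
    by (rule distr_distr[symmetric]) simp_all
  also have "distr (data_H0 n T mu S \<Otimes>\<^sub>M ?U) (data_H0 n T mu S) fst = data_H0 n T mu S"
    by (rule U.distr_pair_fst)
  finally show ?thesis .
qed

lemma conv_pow_mvn_pos: "0 < conv_pow (mvn mu S) k b"
  by (rule conv_pow_pos) (simp_all add: mvn_density_pos[OF S])

lemma conv_pow_mvn_nonzero: "conv_pow (mvn mu S) k b \<noteq> 0"
  using conv_pow_mvn_pos[of k b] by simp

lemma running_means_density_H0_pos:
  "0 < running_means_density n (\<lambda>_. conv_pow (mvn mu S) (n - 1)) T m"
  unfolding running_means_density_def zero_less_iff_neq_zero using n conv_pow_mvn_nonzero by simp

lemma AE_muhat_vec_density_H0_pos:
  assumes "distributed (data_H0 n T mu S) (PiM {1..T} (\<lambda>_. lborel)) (muhat_vec n T) f0"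
  shows "AE m in PiM {1..T} (\<lambda>_. lborel). 0 < f0 m"
proof -
  interpret sigma_finite_measure "PiM {1..T} (\<lambda>_. (lborel :: (real^'d) measure))"
    by (rule sigma_finite_PiM_lborel) simp
  have "AE m in PiM {1..T} (\<lambda>_. lborel). f0 m = running_means_density n (\<lambda>_. conv_pow (mvn mu S) (n - 1)) T m"
    using assms distributed_muhat_vec_H0
    by (intro density_unique) (simp_all add: distributed_def)
  then show ?thesis using running_means_density_H0_pos by (auto elim!: eventually_mono)
qed

lemma distr_muhat_vec_H1_eq_density_H0:
  "distr (data_H1 n T mu S z tau) (PiM {1..T} (\<lambda>_. lborel)) (muhat_vec n T)
     = density (distr (data_H0 n T mu S) (PiM {1..T} (\<lambda>_. lborel)) (muhat_vec n T))
         (\<lambda>m. replaced_batch_density n tau z (mvn mu S) tau (batch_total n tau m)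
                / conv_pow (mvn mu S) (n - 1) (batch_total n tau m))"
proof -
  let ?E = "PiM {1..T} (\<lambda>_. lborel :: (real^'d) measure)"
  let ?F0 = "running_means_density n (\<lambda>_. conv_pow (mvn mu S) (n - 1)) T"
  let ?F1 = "running_means_density n (replaced_batch_density n tau z (mvn mu S)) T"
  let ?\<rho> = "\<lambda>m. replaced_batch_density n tau z (mvn mu S) tau (batch_total n tau m)
                / conv_pow (mvn mu S) (n - 1) (batch_total n tau m)"
  have F0: "distr (data_H0 n T mu S) ?E (muhat_vec n T) = density ?E ?F0"
    and F0_meas[measurable]: "?F0 \<in> borel_measurable ?E"
    using distributed_muhat_vec_H0 unfolding distributed_def by auto
  have "AE m in ?E. ?F0 m \<noteq> \<infinity>"
    by (rule AE_finite_of_emeasure_density_finite[OF F0_meas emeasure_density_distributed_finite[OF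
          finite_measure_data_H0 distributed_muhat_vec_H0]])
  then have "AE m in ?E. ?F1 m = ?F0 m * ?\<rho> m"
  proof (rule eventually_mono)
    fix m assume "?F0 m \<noteq> \<infinity>"
    then show "?F1 m = ?F0 m * ?\<rho> m"
      using n conv_pow_mvn_nonzero
      by (intro running_means_density_change_one_batch[OF tau])
         (simp_all add: replaced_batch_density_def)
  qed
  moreover have F1_meas: "?F1 \<in> borel_measurable ?E"
    by (intro borel_measurable_running_means_density) simp
  moreover have "(\<lambda>b. replaced_batch_density n tau z (mvn mu S) tau b / conv_pow (mvn mu S) (n - 1) b)
      \<in> borel_measurable borel"
    by measurable
  from measurable_compose[OF borel_measurable_batch_total[OF tau] this]
  have \<rho>_meas: "?\<rho> \<in> borel_measurable ?E" .
  ultimately have "density ?E ?F1 = density ?E (\<lambda>m. ?F0 m * ?\<rho> m)"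
    by (intro density_cong borel_measurable_times_ennreal F0_meas)
  then show ?thesis
    unfolding distr_muhat_vec_H1 F0 density_density_eq[OF F0_meas \<rho>_meas] .
qed

lemma likelihood_ratio_eq_cond_density_ratio:
  assumes "2 \<le> tau"
    and f0: "distributed (data_H0 n T mu S) (PiM {1..T} (\<lambda>_. lborel)) (muhat_vec n T) f0"
    and f1: "distributed (data_H1 n T mu S z tau) (PiM {1..T} (\<lambda>_. lborel)) (muhat_vec n T) f1"
    and q0: "cond_density (data_H0 n T mu S) (\<lambda>X. muhat n X (tau - 1)) (\<lambda>X. muhat n X tau) q0"
    and q1: "cond_density (data_H1 n T mu S z tau) (\<lambda>X. muhat n X (tau - 1)) (\<lambda>X. muhat n X tau) q1"
  shows "AE x in PiM {1..T} (\<lambda>_. lborel).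
           enn2real (f1 x) / enn2real (f0 x) = q1 (x (tau - 1)) (x tau) / q0 (x (tau - 1)) (x tau)"
proof -
  have coords: "tau - 1 \<in> {1..T}" "tau \<in> {1..T}" using assms(1) tau by auto
  then have muhat: "(\<lambda>X. muhat n X (tau - 1)) = (\<lambda>X. muhat_vec n T X (tau - 1))"
      "(\<lambda>X. muhat n X tau) = (\<lambda>X. muhat_vec n T X tau)"
    by (simp_all add: muhat_vec_apply)
  define \<rho> where "\<rho> = (\<lambda>(a, b). replaced_batch_density n tau z (mvn mu S) tau
      ((real n * real tau) *\<^sub>R b - (real n * real (tau - 1)) *\<^sub>R a)
      / conv_pow (mvn mu S) (n - 1) ((real n * real tau) *\<^sub>R b - (real n * real (tau - 1)) *\<^sub>R a))"
  have [measurable]: "\<rho> \<in> borel_measurable (lborel \<Otimes>\<^sub>M (lborel :: (real^'d) measure))"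
    unfolding \<rho>_def by measurable
  have ratio: "distr (data_H1 n T mu S z tau) (PiM {1..T} (\<lambda>_. lborel)) (muhat_vec n T)
      = density (distr (data_H0 n T mu S) (PiM {1..T} (\<lambda>_. lborel)) (muhat_vec n T))
          (\<lambda>m. \<rho> (m (tau - 1), m tau))"
    using distr_muhat_vec_H1_eq_density_H0 unfolding \<rho>_def batch_total_def by simp
  have marg: "distr (data_H1 n T mu S z tau) lborel (\<lambda>X. muhat_vec n T X (tau - 1))
      = distr (data_H0 n T mu S) lborel (\<lambda>X. muhat_vec n T X (tau - 1))"
    using distr_muhat_H1_eq_H0[of "tau - 1"] assms(1) unfolding muhat by simp
  have "(\<lambda>m. m (tau - 1)) \<in> measurable (PiM {1..T} (\<lambda>_. lborel)) lborel"
    "(\<lambda>m. m tau) \<in> measurable (PiM {1..T} (\<lambda>_. lborel)) (lborel :: (real^'d) measure)"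
    using coords by (intro measurable_component_singleton; simp)+
  from cond_density_ratio_eq[where A="\<lambda>m. m (tau - 1)" and B="\<lambda>m. m tau" and Y="muhat_vec n T"
      and \<rho>=\<rho>, OF sigma_finite_PiM_lborel[OF finite_atLeastAtMost] finite_measure_data_H0 this _
      AE_muhat_vec_density_H0_pos[OF f0] ratio marg f0 f1 q0[unfolded muhat] q1[unfolded muhat]]
  show ?thesis by simp
qed

lemma likelihood_ratio_eq_marg_density_ratio:
  assumes "tau = 1"
    and f0: "distributed (data_H0 n T mu S) (PiM {1..T} (\<lambda>_. lborel)) (muhat_vec n T) f0"
    and f1: "distributed (data_H1 n T mu S z tau) (PiM {1..T} (\<lambda>_. lborel)) (muhat_vec n T) f1"
    and q0: "marg_as_cond_density (data_H0 n T mu S) (\<lambda>X. muhat n X 1) q0"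
    and q1: "marg_as_cond_density (data_H1 n T mu S z tau) (\<lambda>X. muhat n X 1) q1"
  shows "AE x in PiM {1..T} (\<lambda>_. lborel).
           enn2real (f1 x) / enn2real (f0 x) = q1 (x (tau - 1)) (x tau) / q0 (x (tau - 1)) (x tau)"
proof -
  have "1 \<in> {1..T}" using tau assms(1) by simp
  then have muhat: "(\<lambda>X. muhat n X 1) = (\<lambda>X. muhat_vec n T X 1)"
    by (simp add: muhat_vec_apply)
  define \<rho> where "\<rho> = (\<lambda>b. replaced_batch_density n 1 z (mvn mu S) 1 (real n *\<^sub>R b)
      / conv_pow (mvn mu S) (n - 1) (real n *\<^sub>R b))"
  have "\<rho> \<in> borel_measurable (borel :: (real^'d) measure)"
    unfolding \<rho>_def by measurable
  then have [measurable]: "\<rho> \<in> borel_measurable (lborel :: (real^'d) measure)"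
    by simp
  have ratio: "distr (data_H1 n T mu S z tau) (PiM {1..T} (\<lambda>_. lborel)) (muhat_vec n T)
      = density (distr (data_H0 n T mu S) (PiM {1..T} (\<lambda>_. lborel)) (muhat_vec n T)) (\<lambda>m. \<rho> (m 1))"
    using distr_muhat_vec_H1_eq_density_H0 assms(1) unfolding \<rho>_def batch_total_def by simp
  have "(\<lambda>m. m 1) \<in> measurable (PiM {1..T} (\<lambda>_. lborel)) (lborel :: (real^'d) measure)"
    using \<open>1 \<in> {1..T}\<close> by (intro measurable_component_singleton) simp
  from marg_density_ratio_eq[where B="\<lambda>m. m 1" and Y="muhat_vec n T" and \<rho>=\<rho>,
      OF sigma_finite_PiM_lborel[OF finite_atLeastAtMost] finite_measure_data_H0 this _
      AE_muhat_vec_density_H0_pos[OF f0] ratio f0 f1 q0[unfolded muhat] q1[unfolded muhat]]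
  show ?thesis unfolding \<open>tau = 1\<close> by simp
qed

end

theorem lemma3p2:
  fixes T n tau :: nat and mu z :: "real^'d" and S :: "real^'d^'d"
    and f0 f1 :: "(nat \<Rightarrow> real^'d) \<Rightarrow> ennreal"
    and q0 q1 :: "real^'d \<Rightarrow> real^'d \<Rightarrow> real"
  assumes "T \<ge> 1" and "n \<ge> 2" and "pos_def_mat S" and "tau \<in> {1..T}"
    and "distributed (data_H0 n T mu S) (PiM {1..T} (\<lambda>_. lborel)) (muhat_vec n T) f0"
    and "distributed (data_H1 n T mu S z tau) (PiM {1..T} (\<lambda>_. lborel)) (muhat_vec n T) f1"
    and "tau = 1 \<Longrightarrow> marg_as_cond_density (data_H0 n T mu S) (\<lambda>X. muhat n X 1) q0"
    and "tau = 1 \<Longrightarrow> marg_as_cond_density (data_H1 n T mu S z tau) (\<lambda>X. muhat n X 1) q1"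
    and "tau \<ge> 2 \<Longrightarrow> cond_density (data_H0 n T mu S)
           (\<lambda>X. muhat n X (tau - 1)) (\<lambda>X. muhat n X tau) q0"
    and "tau \<ge> 2 \<Longrightarrow> cond_density (data_H1 n T mu S z tau)
           (\<lambda>X. muhat n X (tau - 1)) (\<lambda>X. muhat n X tau) q1"
  shows "AE x in PiM {1..T} (\<lambda>_. lborel).
           enn2real (f1 x) / enn2real (f0 x)
             = q1 (x (tau - 1)) (x tau) / q0 (x (tau - 1)) (x tau)"
proof (cases "tau = 1")
  case True
  show ?thesis
    by (rule likelihood_ratio_eq_marg_density_ratio[OF assms(3,2,4) True assms(5,6) assms(7,8)[OF True]])
next
  case False
  then have "2 \<le> tau" using assms(4) by simp
  show ?thesis
    by (rule likelihood_ratio_eq_cond_density_ratio[OF assms(3,2,4) \<open>2 \<le> tau\<close> assms(5,6)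
          assms(9,10)[OF \<open>2 \<le> tau\<close>]])
qed

end
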